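(* Let $k$ be a field, $\Delta$ a finite connected quiver without oriented cycles, and $M$ a generic $k\Delta$-module. If $i$ is a sink of $\Delta$, then $\operatorname{\bold{Dim}}\sigma_i M=\sigma_i\operatorname{\bold{Dim}}M$. If $i$ is a source of $\Delta$, then $\operatorname{\bold{Dim}}\sigma_i^- M=\sigma_i\operatorname{\bold{Dim}}M$.
   Context: Modules over $k\Delta$ are representations $M=(M_i,M_\alpha)$ of $\Delta$, possibly infinite-dimensional. For an arrow $\alpha$, $s(\alpha)$ and $t(\alpha)$ denote its start and terminal vertex. $E(M)=\operatorname{End}(M)^{\mathrm{op}}$; $M$ and each $M_i$ are $E(M)$-modules. $M$ is endo-finite if it has finite length as $E(M)$-module, and generic if it is indecomposable, endo-finite and of infinite length. For endo-finite $M$ the endo-length vector $\operatorname{\bold{Dim}}M\in\mathbb Z^{\Delta_0}$ is given by $(\operatorname{\bold{Dim}}M)_i=$ length of $M_i$ as $E(M)$-module. For a vertex $i$, $\sigma_i\Delta$ is the quiver obtained by reversing all arrows incident with $i$. For a sink $i$, the reflection functor $\sigma_i$ sends $M$ to the representation of $\sigma_i\Delta$ with $(\sigma_iM)_j=M_j$ for $j\neq i$ and $(\sigma_iM)_i$ the kernel of the map $\bigoplus_{t(\alpha)=i}M_{s(\alpha)}\to M_i$ with components $M_\alpha$, the reversed arrows acting by the components of the inclusion; dually for a source $i$, $\sigma_i^-M$ has $(\sigma_i^-M)_i$ the cokernel of $M_i\to\bigoplus_{s(\alpha)=i}M_{t(\alpha)}$. The reflection $\sigma_i\colon\mathbb Z^{\Delta_0}\to\mathbb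 Z^{\Delta_0}$ is $(\sigma_ix)_j=x_j$ for $j\ne i$ and $(\sigma_ix)_i=-x_i+\sum_\alpha x_{j(\alpha)}$, the sum over arrows $\alpha$ incident with $i$ and $j(\alpha)$ the other endpoint of $\alpha$. *)

theory Defs
  imports Main
begin

text \<open>A representation over a field 'k is given by subspaces
Mv j of the ambient k-vector space of functions 'w => 'k (every k-vector space,
possibly infinite-dimensional, is isomorphic to such a subspace), together with
maps Ma alpha, k-linear from Mv (s alpha) to Mv (t alpha).\<close>

definition is_subspace :: "('w \<Rightarrow> 'k::field) set \<Rightarrow> bool" where
  "is_subspace S \<longleftrightarrow> (\<lambda>_. 0) \<in> S \<and> (\<forall>x\<in>S. \<forall>y\<in>S. (\<lambda>u. x u + y u) \<in> S)
     \<and> (\<forall>c. \<forall>x\<in>S. (\<lambda>u. c * x u) \<in> S)"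

definition lin_on :: "('w \<Rightarrow> 'k::field) set \<Rightarrow> (('w \<Rightarrow> 'k) \<Rightarrow> ('z \<Rightarrow> 'k)) \<Rightarrow> bool" where
  "lin_on S f \<longleftrightarrow> (\<forall>x\<in>S. \<forall>y\<in>S. f (\<lambda>u. x u + y u) = (\<lambda>u. f x u + f y u))
     \<and> (\<forall>c. \<forall>x\<in>S. f (\<lambda>u. c * x u) = (\<lambda>u. c * f x u))"

definition finite_quiver :: "'v set \<Rightarrow> 'a set \<Rightarrow> ('a \<Rightarrow> 'v) \<Rightarrow> ('a \<Rightarrow> 'v) \<Rightarrow> bool" where
  "finite_quiver V A s t \<longleftrightarrow> finite V \<and> finite A \<and> (\<forall>\<alpha>\<in>A. s \<alpha> \<in> V \<and> t \<alpha> \<in> V)"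

definition connected_quiver :: "'v set \<Rightarrow> 'a set \<Rightarrow> ('a \<Rightarrow> 'v) \<Rightarrow> ('a \<Rightarrow> 'v) \<Rightarrow> bool" where
  "connected_quiver V A s t \<longleftrightarrow> V \<noteq> {} \<and>
     (\<forall>u\<in>V. \<forall>v\<in>V. (\<lambda>x y. \<exists>\<alpha>\<in>A. (s \<alpha> = x \<and> t \<alpha> = y) \<or> (s \<alpha> = y \<and> t \<alpha> = x))\<^sup>*\<^sup>* u v)"

definition no_oriented_cycles :: "'v set \<Rightarrow> 'a set \<Rightarrow> ('a \<Rightarrow> 'v) \<Rightarrow> ('a \<Rightarrow> 'v) \<Rightarrow> bool" where
  "no_oriented_cycles V A s t \<longleftrightarrow> (\<forall>v. \<not> (\<lambda>x y. \<exists>\<alpha>\<in>A. s \<alpha> = x \<and> t \<alpha> = y)\<^sup>+\<^sup>+ v v)"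

definition is_sink :: "'v set \<Rightarrow> 'a set \<Rightarrow> ('a \<Rightarrow> 'v) \<Rightarrow> ('a \<Rightarrow> 'v) \<Rightarrow> 'v \<Rightarrow> bool" where
  "is_sink V A s t i \<longleftrightarrow> i \<in> V \<and> (\<forall>\<alpha>\<in>A. s \<alpha> \<noteq> i)"

definition is_source :: "'v set \<Rightarrow> 'a set \<Rightarrow> ('a \<Rightarrow> 'v) \<Rightarrow> ('a \<Rightarrow> 'v) \<Rightarrow> 'v \<Rightarrow> bool" where
  "is_source V A s t i \<longleftrightarrow> i \<in> V \<and> (\<forall>\<alpha>\<in>A. t \<alpha> \<noteq> i)"

definition rev_s :: "'v \<Rightarrow> ('a \<Rightarrow> 'v) \<Rightarrow> ('a \<Rightarrow> 'v) \<Rightarrow> 'a \<Rightarrow> 'v" where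
  "rev_s i s t \<alpha> = (if s \<alpha> = i \<or> t \<alpha> = i then t \<alpha> else s \<alpha>)"

definition rev_t :: "'v \<Rightarrow> ('a \<Rightarrow> 'v) \<Rightarrow> ('a \<Rightarrow> 'v) \<Rightarrow> 'a \<Rightarrow> 'v" where
  "rev_t i s t \<alpha> = (if s \<alpha> = i \<or> t \<alpha> = i then s \<alpha> else t \<alpha>)"

definition refl_vec :: "'v set \<Rightarrow> 'a set \<Rightarrow> ('a \<Rightarrow> 'v) \<Rightarrow> ('a \<Rightarrow> 'v) \<Rightarrow> 'v \<Rightarrow> ('v \<Rightarrow> int) \<Rightarrow> ('v \<Rightarrow> int)" where
  "refl_vec V A s t i x = (\<lambda>j. if j = i then
      - x i + (\<Sum>\<alpha>\<in>{\<alpha>\<in>A. s \<alpha> = i \<or> t \<alpha> = i}. x (if s \<alpha> = i then t \<alpha> else s \<alpha>))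
    else x j)"

definition is_rep :: "'v set \<Rightarrow> 'a set \<Rightarrow> ('a \<Rightarrow> 'v) \<Rightarrow> ('a \<Rightarrow> 'v)
   \<Rightarrow> ('v \<Rightarrow> ('w \<Rightarrow> 'k::field) set) \<Rightarrow> ('a \<Rightarrow> ('w \<Rightarrow> 'k) \<Rightarrow> ('w \<Rightarrow> 'k)) \<Rightarrow> bool" where
  "is_rep V A s t Mv Ma \<longleftrightarrow> (\<forall>j\<in>V. is_subspace (Mv j)) \<and>
     (\<forall>\<alpha>\<in>A. lin_on (Mv (s \<alpha>)) (Ma \<alpha>) \<and> Ma \<alpha> ` Mv (s \<alpha>) \<subseteq> Mv (t \<alpha>))"

text \<open>Families (elements of the direct sum of the Mv j, j in V).\<close>
definition fzero :: "'v \<Rightarrow> 'w \<Rightarrow> 'k::field" where "fzero = (\<lambda>j u. 0)"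
definition fadd :: "('v \<Rightarrow> 'w \<Rightarrow> 'k::field) \<Rightarrow> ('v \<Rightarrow> 'w \<Rightarrow> 'k) \<Rightarrow> ('v \<Rightarrow> 'w \<Rightarrow> 'k)" where
  "fadd x y = (\<lambda>j u. x j u + y j u)"
definition fscale :: "'k::field \<Rightarrow> ('v \<Rightarrow> 'w \<Rightarrow> 'k) \<Rightarrow> ('v \<Rightarrow> 'w \<Rightarrow> 'k)" where
  "fscale c x = (\<lambda>j u. c * x j u)"

definition tot :: "'v set \<Rightarrow> ('v \<Rightarrow> ('w \<Rightarrow> 'k::field) set) \<Rightarrow> ('v \<Rightarrow> 'w \<Rightarrow> 'k) set" where
  "tot V Mv = {x. (\<forall>j\<in>V. x j \<in> Mv j) \<and> (\<forall>j. j \<notin> V \<longrightarrow> x j = (\<lambda>_. 0))}"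

definition fsubspace :: "('v \<Rightarrow> 'w \<Rightarrow> 'k::field) set \<Rightarrow> bool" where
  "fsubspace S \<longleftrightarrow> fzero \<in> S \<and> (\<forall>x\<in>S. \<forall>y\<in>S. fadd x y \<in> S) \<and> (\<forall>c. \<forall>x\<in>S. fscale c x \<in> S)"

text \<open>kDelta-submodules of M: closed under the idempotents e_j and the arrows.\<close>
definition ksub :: "'v set \<Rightarrow> 'a set \<Rightarrow> ('a \<Rightarrow> 'v) \<Rightarrow> ('a \<Rightarrow> 'v)
   \<Rightarrow> ('v \<Rightarrow> ('w \<Rightarrow> 'k::field) set) \<Rightarrow> ('a \<Rightarrow> ('w \<Rightarrow> 'k) \<Rightarrow> ('w \<Rightarrow> 'k)) \<Rightarrow> ('v \<Rightarrow> 'w \<Rightarrow> 'k) set \<Rightarrow> bool" where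
  "ksub V A s t Mv Ma S \<longleftrightarrow> S \<subseteq> tot V Mv \<and> fsubspace S \<and>
     (\<forall>j\<in>V. \<forall>x\<in>S. (\<lambda>l. if l = j then x j else (\<lambda>_. 0)) \<in> S) \<and>
     (\<forall>\<alpha>\<in>A. \<forall>x\<in>S. (\<lambda>l. if l = t \<alpha> then Ma \<alpha> (x (s \<alpha>)) else (\<lambda>_. 0)) \<in> S)"

text \<open>Endomorphisms of the representation; E(M) = End(M)^op acts on M and on each M_i.\<close>
definition endos :: "'v set \<Rightarrow> 'a set \<Rightarrow> ('a \<Rightarrow> 'v) \<Rightarrow> ('a \<Rightarrow> 'v)
   \<Rightarrow> ('v \<Rightarrow> ('w \<Rightarrow> 'k::field) set) \<Rightarrow> ('a \<Rightarrow> ('w \<Rightarrow> 'k) \<Rightarrow> ('w \<Rightarrow> 'k))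
   \<Rightarrow> ('v \<Rightarrow> ('w \<Rightarrow> 'k) \<Rightarrow> ('w \<Rightarrow> 'k)) set" where
  "endos V A s t Mv Ma = {\<phi>. (\<forall>j\<in>V. lin_on (Mv j) (\<phi> j) \<and> \<phi> j ` Mv j \<subseteq> Mv j) \<and>
     (\<forall>\<alpha>\<in>A. \<forall>x\<in>Mv (s \<alpha>). \<phi> (t \<alpha>) (Ma \<alpha> x) = Ma \<alpha> (\<phi> (s \<alpha>) x))}"

definition esub_tot :: "'v set \<Rightarrow> 'a set \<Rightarrow> ('a \<Rightarrow> 'v) \<Rightarrow> ('a \<Rightarrow> 'v)
   \<Rightarrow> ('v \<Rightarrow> ('w \<Rightarrow> 'k::field) set) \<Rightarrow> ('a \<Rightarrow> ('w \<Rightarrow> 'k) \<Rightarrow> ('w \<Rightarrow> 'k)) \<Rightarrow> ('v \<Rightarrow> 'w \<Rightarrow> 'k) set \<Rightarrow> bool" where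
  "esub_tot V A s t Mv Ma S \<longleftrightarrow> S \<subseteq> tot V Mv \<and> fsubspace S \<and>
     (\<forall>\<phi>\<in>endos V A s t Mv Ma. \<forall>x\<in>S. (\<lambda>j. if j \<in> V then \<phi> j (x j) else x j) \<in> S)"

definition esub :: "'v set \<Rightarrow> 'a set \<Rightarrow> ('a \<Rightarrow> 'v) \<Rightarrow> ('a \<Rightarrow> 'v)
   \<Rightarrow> ('v \<Rightarrow> ('w \<Rightarrow> 'k::field) set) \<Rightarrow> ('a \<Rightarrow> ('w \<Rightarrow> 'k) \<Rightarrow> ('w \<Rightarrow> 'k)) \<Rightarrow> 'v \<Rightarrow> ('w \<Rightarrow> 'k) set \<Rightarrow> bool" where
  "esub V A s t Mv Ma i U \<longleftrightarrow> U \<subseteq> Mv i \<and> is_subspace U \<and>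
     (\<forall>\<phi>\<in>endos V A s t Mv Ma. \<phi> i ` U \<subseteq> U)"

text \<open>Length of a module, via strictly increasing chains of submodules
  (P is the predicate "is a submodule").\<close>
definition has_chain :: "('m set \<Rightarrow> bool) \<Rightarrow> nat \<Rightarrow> bool" where
  "has_chain P n \<longleftrightarrow> (\<exists>U. (\<forall>j\<le>n. P (U j)) \<and> (\<forall>j<n. U j \<subset> U (Suc j)))"

definition finite_length :: "('m set \<Rightarrow> bool) \<Rightarrow> bool" where
  "finite_length P \<longleftrightarrow> (\<exists>N. \<forall>n. has_chain P n \<longrightarrow> n \<le> N)"

definition mod_length :: "('m set \<Rightarrow> bool) \<Rightarrow> nat" where
  "mod_length P = (GREATEST n. has_chain P n)"

definition indecomposable :: "'v set \<Rightarrow> 'a set \<Rightarrow> ('a \<Rightarrow> 'v) \<Rightarrow> ('a \<Rightarrow> 'v)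
   \<Rightarrow> ('v \<Rightarrow> ('w \<Rightarrow> 'k::field) set) \<Rightarrow> ('a \<Rightarrow> ('w \<Rightarrow> 'k) \<Rightarrow> ('w \<Rightarrow> 'k)) \<Rightarrow> bool" where
  "indecomposable V A s t Mv Ma \<longleftrightarrow> tot V Mv \<noteq> {fzero} \<and>
     \<not> (\<exists>S T. ksub V A s t Mv Ma S \<and> ksub V A s t Mv Ma T \<and> S \<noteq> {fzero} \<and> T \<noteq> {fzero}
          \<and> S \<inter> T = {fzero} \<and> tot V Mv = {fadd x y | x y. x \<in> S \<and> y \<in> T})"

definition endo_finite :: "'v set \<Rightarrow> 'a set \<Rightarrow> ('a \<Rightarrow> 'v) \<Rightarrow> ('a \<Rightarrow> 'v)
   \<Rightarrow> ('v \<Rightarrow> ('w \<Rightarrow> 'k::field) set) \<Rightarrow> ('a \<Rightarrow> ('w \<Rightarrow> 'k) \<Rightarrow> ('w \<Rightarrow> 'k)) \<Rightarrow> bool" where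
  "endo_finite V A s t Mv Ma \<longleftrightarrow> finite_length (esub_tot V A s t Mv Ma)"

definition generic :: "'v set \<Rightarrow> 'a set \<Rightarrow> ('a \<Rightarrow> 'v) \<Rightarrow> ('a \<Rightarrow> 'v)
   \<Rightarrow> ('v \<Rightarrow> ('w \<Rightarrow> 'k::field) set) \<Rightarrow> ('a \<Rightarrow> ('w \<Rightarrow> 'k) \<Rightarrow> ('w \<Rightarrow> 'k)) \<Rightarrow> bool" where
  "generic V A s t Mv Ma \<longleftrightarrow> is_rep V A s t Mv Ma \<and> indecomposable V A s t Mv Ma \<and>
     endo_finite V A s t Mv Ma \<and> \<not> finite_length (ksub V A s t Mv Ma)"

definition Dim :: "'v set \<Rightarrow> 'a set \<Rightarrow> ('a \<Rightarrow> 'v) \<Rightarrow> ('a \<Rightarrow> 'v)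
   \<Rightarrow> ('v \<Rightarrow> ('w \<Rightarrow> 'k::field) set) \<Rightarrow> ('a \<Rightarrow> ('w \<Rightarrow> 'k) \<Rightarrow> ('w \<Rightarrow> 'k)) \<Rightarrow> 'v \<Rightarrow> int" where
  "Dim V A s t Mv Ma = (\<lambda>i. if i \<in> V then int (mod_length (esub V A s t Mv Ma i)) else 0)"

text \<open>The reflected representation lives in the ambient space ('a option \<times> 'w) => 'k:
  index None carries a copy of the old ambient space, index Some alpha carries the
  alpha-component of the direct sum.\<close>
definition emb :: "('w \<Rightarrow> 'k::field) \<Rightarrow> ('a option \<times> 'w \<Rightarrow> 'k)" where
  "emb m = (\<lambda>(ob, u). case ob of None \<Rightarrow> m u | Some _ \<Rightarrow> 0)"

definition unemb :: "('a option \<times> 'w \<Rightarrow> 'k::field) \<Rightarrow> ('w \<Rightarrow> 'k)" where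
  "unemb f = (\<lambda>u. f (None, u))"

definition comp :: "'a \<Rightarrow> ('a option \<times> 'w \<Rightarrow> 'k::field) \<Rightarrow> ('w \<Rightarrow> 'k)" where
  "comp \<alpha> f = (\<lambda>u. f (Some \<alpha>, u))"

definition inj_comp :: "'a \<Rightarrow> ('w \<Rightarrow> 'k::field) \<Rightarrow> ('a option \<times> 'w \<Rightarrow> 'k)" where
  "inj_comp \<alpha> m = (\<lambda>(ob, u). if ob = Some \<alpha> then m u else 0)"

text \<open>sigma_i M for a sink i: at i the kernel of the sum map, realised inside the
  direct sum of the M_{s alpha}, t alpha = i.\<close>
definition sink_space :: "'v set \<Rightarrow> 'a set \<Rightarrow> ('a \<Rightarrow> 'v) \<Rightarrow> ('a \<Rightarrow> 'v)
   \<Rightarrow> ('v \<Rightarrow> ('w \<Rightarrow> 'k::field) set) \<Rightarrow> ('a \<Rightarrow> ('w \<Rightarrow> 'k) \<Rightarrow> ('w \<Rightarrow> 'k)) \<Rightarrow> 'v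
   \<Rightarrow> 'v \<Rightarrow> ('a option \<times> 'w \<Rightarrow> 'k) set" where
  "sink_space V A s t Mv Ma i j = (if j = i then
      {f. (\<forall>u. f (None, u) = 0) \<and> (\<forall>\<alpha>. (\<alpha> \<notin> A \<or> t \<alpha> \<noteq> i) \<longrightarrow> comp \<alpha> f = (\<lambda>_. 0)) \<and>
          (\<forall>\<alpha>\<in>A. t \<alpha> = i \<longrightarrow> comp \<alpha> f \<in> Mv (s \<alpha>)) \<and>
          (\<lambda>u. \<Sum>\<alpha>\<in>{\<alpha>\<in>A. t \<alpha> = i}. Ma \<alpha> (comp \<alpha> f) u) = (\<lambda>_. 0)}
    else emb ` Mv j)"

definition sink_map :: "'v set \<Rightarrow> 'a set \<Rightarrow> ('a \<Rightarrow> 'v) \<Rightarrow> ('a \<Rightarrow> 'v)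
   \<Rightarrow> ('v \<Rightarrow> ('w \<Rightarrow> 'k::field) set) \<Rightarrow> ('a \<Rightarrow> ('w \<Rightarrow> 'k) \<Rightarrow> ('w \<Rightarrow> 'k)) \<Rightarrow> 'v
   \<Rightarrow> 'a \<Rightarrow> ('a option \<times> 'w \<Rightarrow> 'k) \<Rightarrow> ('a option \<times> 'w \<Rightarrow> 'k)" where
  "sink_map V A s t Mv Ma i \<alpha> f =
     (if t \<alpha> = i then emb (comp \<alpha> f) else emb (Ma \<alpha> (unemb f)))"

text \<open>sigma_i^- M for a source i: at i the cokernel of M_i -> direct sum of the
  M_{t alpha}, s alpha = i, realised (up to isomorphism) as a chosen complement C of
  the image, with the canonical projection onto C along the image.\<close>
definition src_sum :: "'v set \<Rightarrow> 'a set \<Rightarrow> ('a \<Rightarrow> 'v) \<Rightarrow> ('a \<Rightarrow> 'v)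
   \<Rightarrow> ('v \<Rightarrow> ('w \<Rightarrow> 'k::field) set) \<Rightarrow> 'v \<Rightarrow> ('a option \<times> 'w \<Rightarrow> 'k) set" where
  "src_sum V A s t Mv i =
      {f. (\<forall>u. f (None, u) = 0) \<and> (\<forall>\<alpha>. (\<alpha> \<notin> A \<or> s \<alpha> \<noteq> i) \<longrightarrow> comp \<alpha> f = (\<lambda>_. 0)) \<and>
          (\<forall>\<alpha>\<in>A. s \<alpha> = i \<longrightarrow> comp \<alpha> f \<in> Mv (t \<alpha>))}"

definition src_image :: "'v set \<Rightarrow> 'a set \<Rightarrow> ('a \<Rightarrow> 'v) \<Rightarrow> ('a \<Rightarrow> 'v)
   \<Rightarrow> ('v \<Rightarrow> ('w \<Rightarrow> 'k::field) set) \<Rightarrow> ('a \<Rightarrow> ('w \<Rightarrow> 'k) \<Rightarrow> ('w \<Rightarrow> 'k)) \<Rightarrow> 'v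
   \<Rightarrow> ('a option \<times> 'w \<Rightarrow> 'k) set" where
  "src_image V A s t Mv Ma i = (\<lambda>m. (\<lambda>(ob, u). case ob of None \<Rightarrow> 0
        | Some \<alpha> \<Rightarrow> if \<alpha> \<in> A \<and> s \<alpha> = i then Ma \<alpha> m u else 0)) ` Mv i"

definition src_compl :: "'v set \<Rightarrow> 'a set \<Rightarrow> ('a \<Rightarrow> 'v) \<Rightarrow> ('a \<Rightarrow> 'v)
   \<Rightarrow> ('v \<Rightarrow> ('w \<Rightarrow> 'k::field) set) \<Rightarrow> ('a \<Rightarrow> ('w \<Rightarrow> 'k) \<Rightarrow> ('w \<Rightarrow> 'k)) \<Rightarrow> 'v
   \<Rightarrow> ('a option \<times> 'w \<Rightarrow> 'k) set" where
  "src_compl V A s t Mv Ma i = (SOME C. is_subspace C \<and> C \<subseteq> src_sum V A s t Mv i \<and>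
      C \<inter> src_image V A s t Mv Ma i = {\<lambda>_. 0} \<and>
      (\<forall>p\<in>src_sum V A s t Mv i. \<exists>c\<in>C. \<exists>g\<in>src_image V A s t Mv Ma i. p = (\<lambda>x. c x + g x)))"

definition src_proj :: "'v set \<Rightarrow> 'a set \<Rightarrow> ('a \<Rightarrow> 'v) \<Rightarrow> ('a \<Rightarrow> 'v)
   \<Rightarrow> ('v \<Rightarrow> ('w \<Rightarrow> 'k::field) set) \<Rightarrow> ('a \<Rightarrow> ('w \<Rightarrow> 'k) \<Rightarrow> ('w \<Rightarrow> 'k)) \<Rightarrow> 'v
   \<Rightarrow> ('a option \<times> 'w \<Rightarrow> 'k) \<Rightarrow> ('a option \<times> 'w \<Rightarrow> 'k)" where
  "src_proj V A s t Mv Ma i p = (THE c. c \<in> src_compl V A s t Mv Ma i \<and>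
      (\<exists>g\<in>src_image V A s t Mv Ma i. p = (\<lambda>x. c x + g x)))"

definition source_space :: "'v set \<Rightarrow> 'a set \<Rightarrow> ('a \<Rightarrow> 'v) \<Rightarrow> ('a \<Rightarrow> 'v)
   \<Rightarrow> ('v \<Rightarrow> ('w \<Rightarrow> 'k::field) set) \<Rightarrow> ('a \<Rightarrow> ('w \<Rightarrow> 'k) \<Rightarrow> ('w \<Rightarrow> 'k)) \<Rightarrow> 'v
   \<Rightarrow> 'v \<Rightarrow> ('a option \<times> 'w \<Rightarrow> 'k) set" where
  "source_space V A s t Mv Ma i j =
     (if j = i then src_compl V A s t Mv Ma i else emb ` Mv j)"

definition source_map :: "'v set \<Rightarrow> 'a set \<Rightarrow> ('a \<Rightarrow> 'v) \<Rightarrow> ('a \<Rightarrow> 'v)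
   \<Rightarrow> ('v \<Rightarrow> ('w \<Rightarrow> 'k::field) set) \<Rightarrow> ('a \<Rightarrow> ('w \<Rightarrow> 'k) \<Rightarrow> ('w \<Rightarrow> 'k)) \<Rightarrow> 'v
   \<Rightarrow> 'a \<Rightarrow> ('a option \<times> 'w \<Rightarrow> 'k) \<Rightarrow> ('a option \<times> 'w \<Rightarrow> 'k)" where
  "source_map V A s t Mv Ma i \<alpha> f =
     (if s \<alpha> = i then src_proj V A s t Mv Ma i (inj_comp \<alpha> (unemb f))
      else emb (Ma \<alpha> (unemb f)))"

end

theory Submission
  imports Defs "HOL-Library.Function_Algebras"
begin

text \<open>At a sink i, the map from the direct sum of the M_{s \<alpha>}, t \<alpha> = i, to M_i is onto:
  otherwise a complement of its image would split off from the indecomposable M, and M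
  cannot be concentrated at i, since an indecomposable representation concentrated at one
  vertex is one-dimensional and hence of finite length. Thus
  0 \<rightarrow> (\<sigma>_i M)_i \<rightarrow> \<Oplus> M_{s \<alpha>} \<rightarrow> M_i \<rightarrow> 0 is exact. Endomorphisms of M and of \<sigma>_i M
  correspond to each other (at i through this sequence, elsewhere trivially), so the three
  terms are compatible E(M)-modules, and additivity of length gives
  (Dim \<sigma>_i M)_i = \<Sum> (Dim M)_{s \<alpha>} - (Dim M)_i, while nothing changes away from i. At a
  source the map M_i \<rightarrow> \<Oplus> M_{t \<alpha>} is injective for the same reason, and (\<sigma>_i^- M)_i is a
  complement of its image, i.e. a copy of the cokernel.\<close>

section \<open>Linear algebra in function spaces\<close>

lemma zero_fun_lambda [simp]: "(\<lambda>u. 0) = (0::'a \<Rightarrow> 'b::zero)"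
  by (simp add: zero_fun_def)
lemma scale_minus_one_fun: "(\<lambda>u. (-1::'k::field) * x u) = - x"
  by (auto simp: fun_eq_iff)

lemma subspace_0: "is_subspace S \<Longrightarrow> (0::'w\<Rightarrow>'k::field) \<in> S"
  by (simp add: is_subspace_def)
lemma subspace_add: "is_subspace S \<Longrightarrow> x \<in> S \<Longrightarrow> y \<in> S \<Longrightarrow> (x::'w\<Rightarrow>'k::field) + y \<in> S"
  unfolding is_subspace_def plus_fun_def by blast
lemma subspace_scale: "is_subspace S \<Longrightarrow> x \<in> S \<Longrightarrow> (\<lambda>u. c * (x::'w\<Rightarrow>'k::field) u) \<in> S"
  unfolding is_subspace_def by blast
lemma subspace_uminus: "is_subspace S \<Longrightarrow> x \<in> S \<Longrightarrow> - (x::'w\<Rightarrow>'k::field) \<in> S"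
  using subspace_scale[of S x "-1"] scale_minus_one_fun[of x] by simp
lemma subspace_diff: "is_subspace S \<Longrightarrow> x \<in> S \<Longrightarrow> y \<in> S \<Longrightarrow> (x::'w\<Rightarrow>'k::field) - y \<in> S"
  using subspace_add[of S x "-y"] subspace_uminus[of S y] by simp
lemma subspace_sum: "is_subspace S \<Longrightarrow> (\<And>a. a \<in> I \<Longrightarrow> g a \<in> S) \<Longrightarrow> (\<Sum>a\<in>I. (g a::'w\<Rightarrow>'k::field)) \<in> S"
proof (induction I rule: infinite_finite_induct)
  case (infinite A) then show ?case by (simp add: subspace_0)
next
  case empty then show ?case by (simp add: subspace_0)
next
  case (insert x F) then show ?case unfolding sum.insert[OF insert(1,2)]
    by (intro subspace_add) auto
qed
lemma subspaceI:
  assumes "(0::'w\<Rightarrow>'k::field) \<in> S" "\<And>x y. x \<in> S \<Longrightarrow> y \<in> S \<Longrightarrow> x + y \<in> S"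
   "\<And>c x. x \<in> S \<Longrightarrow> (\<lambda>u. c * x u) \<in> S"
  shows "is_subspace S"
  using assms unfolding is_subspace_def plus_fun_def by auto
lemma subspace_zero: "is_subspace {0::'w\<Rightarrow>'k::field}"
  by (rule subspaceI) auto
lemma subspace_line: "is_subspace {(\<lambda>u. c * (a::'w\<Rightarrow>'k::field) u) | c. True}"
proof (rule subspaceI)
  show "0 \<in> {(\<lambda>u. c * a u) | c. True}" by (auto intro!: exI[of _ 0])
  fix x y assume "x \<in> {(\<lambda>u. c * a u) | c. True}" "y \<in> {(\<lambda>u. c * a u) | c. True}"
  then obtain c1 c2 where "x = (\<lambda>u. c1 * a u)" "y = (\<lambda>u. c2 * a u)" by auto
  then show "x + y \<in> {(\<lambda>u. c * a u) | c. True}"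
    by (auto intro!: exI[of _ "c1 + c2"] simp: fun_eq_iff algebra_simps)
next
  fix d x assume "x \<in> {(\<lambda>u. c * a u) | c. True}"
  then obtain c1 where "x = (\<lambda>u. c1 * a u)" by auto
  then show "(\<lambda>u. d * x u) \<in> {(\<lambda>u. c * a u) | c. True}"
    by (auto intro!: exI[of _ "d * c1"] simp: fun_eq_iff algebra_simps)
qed
lemma subspace_Int: "is_subspace U \<Longrightarrow> is_subspace W \<Longrightarrow> is_subspace (U \<inter> W)"
  by (rule subspaceI) (auto simp: subspace_0 subspace_add subspace_scale)

lemma lin_add: "lin_on S f \<Longrightarrow> x \<in> S \<Longrightarrow> y \<in> S \<Longrightarrow> f ((x::'w\<Rightarrow>'k::field) + y) = f x + (f y :: 'z \<Rightarrow> 'k)"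
  unfolding lin_on_def plus_fun_def by blast
lemma lin_scale: "lin_on S f \<Longrightarrow> x \<in> S \<Longrightarrow> f (\<lambda>u. c * (x::'w\<Rightarrow>'k::field) u) = (\<lambda>u. c * (f x :: 'z \<Rightarrow> 'k) u)"
  unfolding lin_on_def by blast
lemma lin_0: "is_subspace S \<Longrightarrow> lin_on S f \<Longrightarrow> f (0::'w\<Rightarrow>'k::field) = (0 :: 'z \<Rightarrow> 'k)"
  using lin_scale[of S f 0 0] subspace_0[of S] by simp
lemma lin_uminus: "is_subspace S \<Longrightarrow> lin_on S f \<Longrightarrow> x \<in> S \<Longrightarrow> f (- (x::'w\<Rightarrow>'k::field)) = - (f x :: 'z \<Rightarrow> 'k)"
  using lin_scale[of S f x "-1"] scale_minus_one_fun by metis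
lemma lin_diff: "is_subspace S \<Longrightarrow> lin_on S f \<Longrightarrow> x \<in> S \<Longrightarrow> y \<in> S \<Longrightarrow> f ((x::'w\<Rightarrow>'k::field) - y) = f x - (f y :: 'z \<Rightarrow> 'k)"
  using lin_add[of S f x "-y"] lin_uminus[of S f y] subspace_uminus[of S y] by simp
lemma lin_sum: "is_subspace S \<Longrightarrow> lin_on S f \<Longrightarrow> (\<And>a. a \<in> I \<Longrightarrow> g a \<in> S) \<Longrightarrow>
   f (\<Sum>a\<in>I. (g a::'w\<Rightarrow>'k::field)) = (\<Sum>a\<in>I. (f (g a) :: 'z \<Rightarrow> 'k))"
proof (induction I rule: infinite_finite_induct)
  case (infinite A) then show ?case by (simp add: lin_0)
next
  case empty then show ?case by (simp add: lin_0)
next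
  case (insert x F)
  have h1: "f (g x + sum g F) = f (g x) + f (sum g F)"
    by (rule lin_add[OF insert.prems(2)]) (use insert.prems in \<open>auto intro: subspace_sum\<close>)
  have ih: "f (sum g F) = (\<Sum>a\<in>F. f (g a))" using insert.IH insert.prems by blast
  show ?case unfolding sum.insert[OF insert(1,2)] using h1 ih by (simp only:)
qed
lemma linI:
  assumes "\<And>x y. x \<in> S \<Longrightarrow> y \<in> S \<Longrightarrow> f ((x::'w\<Rightarrow>'k::field) + y) = f x + (f y :: 'z \<Rightarrow> 'k)"
    "\<And>c x. x \<in> S \<Longrightarrow> f (\<lambda>u. c * x u) = (\<lambda>u. c * f x u)"
  shows "lin_on S f"
  using assms unfolding lin_on_def plus_fun_def by blast
lemma lin_on_subset: "lin_on S f \<Longrightarrow> T \<subseteq> S \<Longrightarrow> lin_on T f"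
  unfolding lin_on_def by blast

lemma subspace_image: "is_subspace U \<Longrightarrow> lin_on U h \<Longrightarrow> is_subspace (h ` U)"
proof (rule subspaceI)
  assume U: "is_subspace U" and l: "lin_on U h"
  have "h 0 \<in> h ` U" using subspace_0[OF U] by blast
  then show "0 \<in> h ` U" using lin_0[OF U l] by simp
  fix x y assume "x \<in> h ` U" "y \<in> h ` U"
  then obtain a b where ab: "a \<in> U" "b \<in> U" "x = h a" "y = h b" by auto
  have "h (a + b) \<in> h ` U" using subspace_add[OF U ab(1,2)] by blast
  then show "x + y \<in> h ` U" using lin_add[OF l ab(1,2)] ab by simp
next
  fix c x assume U: "is_subspace U" and l: "lin_on U h" and "x \<in> h ` U"
  then obtain a where a: "a \<in> U" "x = h a" by auto
  have "h (\<lambda>u. c * a u) \<in> h ` U" using subspace_scale[OF U a(1)] by blast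
  then show "(\<lambda>u. c * x u) \<in> h ` U" using lin_scale[OF l a(1)] a by simp
qed

lemma subspace_preimage: "is_subspace X \<Longrightarrow> lin_on X h \<Longrightarrow> is_subspace U \<Longrightarrow> is_subspace {x\<in>X. h x \<in> U}"
proof (rule subspaceI)
  assume X: "is_subspace X" and h: "lin_on X h" and U: "is_subspace U"
  show "0 \<in> {x \<in> X. h x \<in> U}" using subspace_0[OF X] lin_0[OF X h] subspace_0[OF U] by simp
  fix x y assume "x \<in> {x \<in> X. h x \<in> U}" "y \<in> {x \<in> X. h x \<in> U}"
  then show "x + y \<in> {x \<in> X. h x \<in> U}"
    using lin_add[OF h] subspace_add[OF X] subspace_add[OF U] by auto
next
  fix c x assume X: "is_subspace X" and h: "lin_on X h" and U: "is_subspace U" and "x \<in> {x \<in> X. h x \<in> U}"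
  then show "(\<lambda>u. c * x u) \<in> {x \<in> X. h x \<in> U}"
    using lin_scale[OF h] subspace_scale[OF X] subspace_scale[OF U] by auto
qed

lemma lin_inj_onI:
  assumes "is_subspace X" "lin_on X h" "\<And>x. x \<in> X \<Longrightarrow> h x = 0 \<Longrightarrow> x = 0"
  shows "inj_on h X"
proof (rule inj_onI)
  fix x y assume "x \<in> X" "y \<in> X" "h x = h y"
  then have "h (x - y) = 0" "x - y \<in> X" using lin_diff[OF assms(1,2)] subspace_diff[OF assms(1)] by auto
  then show "x = y" using assms(3) by fastforce
qed

lemma subspace_Union_chain:
  assumes "\<C> \<noteq> {}" "\<And>A. A \<in> \<C> \<Longrightarrow> is_subspace (A :: ('w \<Rightarrow> 'k::field) set)"
    and "\<And>A B. A \<in> \<C> \<Longrightarrow> B \<in> \<C> \<Longrightarrow> A \<subseteq> B \<or> B \<subseteq> A"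
  shows "is_subspace (\<Union>\<C>)"
proof (rule subspaceI)
  show "0 \<in> \<Union>\<C>" using assms(1,2) subspace_0 by blast
  fix x y assume "x \<in> \<Union>\<C>" "y \<in> \<Union>\<C>"
  then obtain A B where AB: "A \<in> \<C>" "B \<in> \<C>" "x \<in> A" "y \<in> B" by auto
  then consider "A \<subseteq> B" | "B \<subseteq> A" using assms(3) by blast
  then show "x + y \<in> \<Union>\<C>" using AB assms(2) subspace_add by cases blast+
next
  fix c x assume "x \<in> \<Union>\<C>"
  then show "(\<lambda>u. c * x u) \<in> \<Union>\<C>" using assms(2) subspace_scale by blast
qed

lemma subspace_adjoin_vector:
  fixes M U :: "('w \<Rightarrow> 'k::field) set"
  assumes M: "is_subspace M" and U: "is_subspace U" and MU: "M \<inter> U = {0}"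
    and w: "\<And>c u. c \<in> M \<Longrightarrow> u \<in> U \<Longrightarrow> w \<noteq> c + u"
  defines "M' \<equiv> {c + (\<lambda>u. a * w u) | c a. c \<in> M}"
  shows "is_subspace M'" "M' \<inter> U = {0}" "M \<subseteq> M'" "w \<in> M'"
proof -
  show "is_subspace M'" unfolding M'_def
  proof (rule subspaceI)
    show "0 \<in> {c + (\<lambda>u. a * w u) | c a. c \<in> M}" using subspace_0[OF M]
      by (intro CollectI exI[of _ 0] exI[of _ "0::'k"]) (auto simp: fun_eq_iff)
    fix x y assume "x \<in> {c + (\<lambda>u. a * w u) | c a. c \<in> M}" "y \<in> {c + (\<lambda>u. a * w u) | c a. c \<in> M}"
    then obtain c1 a1 c2 a2 where "c1 \<in> M" "c2 \<in> M" "x = c1 + (\<lambda>u. a1 * w u)" "y = c2 + (\<lambda>u. a2 * w u)"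
      by blast
    then show "x + y \<in> {c + (\<lambda>u. a * w u) | c a. c \<in> M}"
      by (intro CollectI exI[of _ "c1 + c2"] exI[of _ "a1 + a2"])
        (auto simp: subspace_add[OF M] fun_eq_iff algebra_simps)
  next
    fix d x assume "x \<in> {c + (\<lambda>u. a * w u) | c a. c \<in> M}"
    then obtain c a where "c \<in> M" "x = c + (\<lambda>u. a * w u)" by blast
    then show "(\<lambda>u. d * x u) \<in> {c + (\<lambda>u. a * w u) | c a. c \<in> M}"
      by (intro CollectI exI[of _ "\<lambda>u. d * c u"] exI[of _ "d * a"])
        (auto simp: subspace_scale[OF M] fun_eq_iff algebra_simps)
  qed
  show "M' \<inter> U = {0}"
  proof
    show "M' \<inter> U \<subseteq> {0}"
    proof
      fix x assume x: "x \<in> M' \<inter> U"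
      then obtain c a where ca: "c \<in> M" "x = c + (\<lambda>u. a * w u)" unfolding M'_def by blast
      show "x \<in> {0}"
      proof (cases "a = 0")
        case True
        then have "x = c" using ca(2) by (simp add: fun_eq_iff)
        then show ?thesis using MU x ca(1) by auto
      next
        case False
        have "w = (\<lambda>u. (- 1 / a) * c u) + (\<lambda>u. (1 / a) * x u)"
          using ca(2) False by (auto simp: fun_eq_iff field_simps)
        moreover have "(\<lambda>u. (- 1 / a) * c u) \<in> M" using subspace_scale[OF M ca(1)] .
        moreover have "(\<lambda>u. (1 / a) * x u) \<in> U" using x by (intro subspace_scale[OF U]) auto
        ultimately show ?thesis using w by metis
      qed
    qed
    show "{0} \<subseteq> M' \<inter> U" using subspace_0[OF \<open>is_subspace M'\<close>] subspace_0[OF U] by blast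
  qed
  show "M \<subseteq> M'"
  proof
    fix c assume "c \<in> M"
    then show "c \<in> M'" unfolding M'_def
      by (intro CollectI exI[of _ c] exI[of _ "0::'k"]) (auto simp: fun_eq_iff)
  qed
  show "w \<in> M'" unfolding M'_def using subspace_0[OF M]
    by (intro CollectI exI[of _ 0] exI[of _ "1::'k"]) (auto simp: fun_eq_iff)
qed

text \<open>Zorn's lemma: a maximal subspace of W meeting U trivially is a complement of U.\<close>
lemma subspace_complement_exists:
  fixes U W :: "('w \<Rightarrow> 'k::field) set"
  assumes W: "is_subspace W" and U: "is_subspace U" and UW: "U \<subseteq> W"
  shows "\<exists>C. is_subspace C \<and> C \<subseteq> W \<and> C \<inter> U = {0} \<and> (\<forall>w\<in>W. \<exists>c\<in>C. \<exists>u\<in>U. w = c + u)"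
proof -
  define \<A> where "\<A> = {C. is_subspace C \<and> C \<subseteq> W \<and> C \<inter> U = {0}}"
  have "\<forall>\<C>\<in>chains \<A>. \<exists>M\<in>\<A>. \<forall>X\<in>\<C>. X \<subseteq> M"
  proof
    fix \<C> assume "\<C> \<in> chains \<A>"
    then have sub: "\<C> \<subseteq> \<A>" and ch: "\<And>A B. A \<in> \<C> \<Longrightarrow> B \<in> \<C> \<Longrightarrow> A \<subseteq> B \<or> B \<subseteq> A"
      unfolding chains_def chain_subset_def by auto
    show "\<exists>M\<in>\<A>. \<forall>X\<in>\<C>. X \<subseteq> M"
    proof (cases "\<C> = {}")
      case True
      have "{0} \<in> \<A>" unfolding \<A>_def using subspace_zero subspace_0[OF W] subspace_0[OF U] by auto
      then show ?thesis using True by auto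
    next
      case False
      have "is_subspace (\<Union>\<C>)" using subspace_Union_chain[OF False _ ch] sub unfolding \<A>_def by blast
      moreover have "\<Union>\<C> \<inter> U = {0}" using False sub subspace_0 U unfolding \<A>_def by blast
      ultimately have "\<Union>\<C> \<in> \<A>" using sub unfolding \<A>_def by blast
      then show ?thesis by blast
    qed
  qed
  from Zorn_Lemma2[OF this] obtain M where M: "M \<in> \<A>" and max: "\<forall>X\<in>\<A>. M \<subseteq> X \<longrightarrow> X = M"
    by (elim bexE)
  have Ms: "is_subspace M" "M \<subseteq> W" "M \<inter> U = {0}" using M unfolding \<A>_def by auto
  have "\<forall>w\<in>W. \<exists>c\<in>M. \<exists>u\<in>U. w = c + u"
  proof (rule ccontr)
    assume "\<not> ?thesis"
    then obtain w where w: "w \<in> W" "\<And>c u. c \<in> M \<Longrightarrow> u \<in> U \<Longrightarrow> w \<noteq> c + u" by blast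
    let ?M' = "{c + (\<lambda>u. a * w u) | c a. c \<in> M}"
    note M' = subspace_adjoin_vector[OF Ms(1) U Ms(3) w(2)]
    have "?M' \<subseteq> W"
    proof
      fix x assume "x \<in> ?M'"
      then obtain c a where "c \<in> M" "x = c + (\<lambda>u. a * w u)" by blast
      then show "x \<in> W" using Ms(2) subspace_add[OF W] subspace_scale[OF W w(1)] by auto
    qed
    then have "?M' \<in> \<A>" unfolding \<A>_def using M'(1,2) by blast
    then have "?M' = M" using max M'(3) by blast
    moreover have "w \<notin> M" using w(2)[of w 0] subspace_0[OF U] by auto
    ultimately show False using M'(4) by blast
  qed
  then show ?thesis using Ms by blast
qed

lemma subspace_complementE:
  fixes U W :: "('w \<Rightarrow> 'k::field) set"
  assumes "is_subspace W" "is_subspace U" "U \<subseteq> W"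
  obtains C where "is_subspace C" "C \<subseteq> W" "C \<inter> U = {0}" "\<And>w. w \<in> W \<Longrightarrow> \<exists>c\<in>C. \<exists>u\<in>U. w = c + u"
proof -
  obtain C where "is_subspace C \<and> C \<subseteq> W \<and> C \<inter> U = {0} \<and> (\<forall>w\<in>W. \<exists>c\<in>C. \<exists>u\<in>U. w = c + u)"
    using subspace_complement_exists[OF assms] by (elim exE)
  then show thesis by (intro that) auto
qed


section \<open>Lengths of modules over a set of operators\<close>

lemma has_chain_transfer:
  assumes "\<And>U. P U \<Longrightarrow> Q (H U)" "\<And>U U'. P U \<Longrightarrow> P U' \<Longrightarrow> U \<subset> U' \<Longrightarrow> H U \<subset> H U'"
    and "has_chain P n"
  shows "has_chain Q n"
proof -
  from assms(3) obtain U where U: "\<forall>j\<le>n. P (U j)" "\<forall>j<n. U j \<subset> U (Suc j)"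
    unfolding has_chain_def by blast
  show ?thesis unfolding has_chain_def
    by (rule exI[of _ "\<lambda>j. H (U j)"]) (use U assms(1,2) in auto)
qed

lemma mod_length_cong: "(\<And>n. has_chain P n = has_chain Q n) \<Longrightarrow> mod_length P = mod_length Q"
  unfolding mod_length_def by presburger

lemma le_mod_length: "finite_length P \<Longrightarrow> has_chain P n \<Longrightarrow> n \<le> mod_length P"
  unfolding finite_length_def mod_length_def by (metis Greatest_le_nat)
lemma has_chain_mod_length:
  assumes "finite_length P" "P U"
  shows "has_chain P (mod_length P)"
proof -
  have "has_chain P 0" unfolding has_chain_def using assms(2) by (intro exI[of _ "\<lambda>_. U"]) auto
  then show ?thesis using assms(1) unfolding finite_length_def mod_length_def by (metis GreatestI_nat)
qed
lemma finite_lengthI: "(\<And>n. has_chain P n \<Longrightarrow> n \<le> N) \<Longrightarrow> finite_length P"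
  unfolding finite_length_def by blast
lemma finite_length_transfer:
  "finite_length Q \<Longrightarrow> (\<And>n. has_chain P n \<Longrightarrow> has_chain Q n) \<Longrightarrow> finite_length P"
  unfolding finite_length_def by blast

lemma has_chain_strict_steps:
  assumes "\<forall>j\<le>n. P (S j)" "\<forall>j<n. S j \<subseteq> S (Suc j)"
  shows "has_chain P (card {j. j<n \<and> S j \<subset> S (Suc j)})"
proof -
  have "\<exists>U. (\<forall>j\<le>card {j. j<n \<and> S j \<subset> S (Suc j)}. P (U j)) \<and>
      (\<forall>j<card {j. j<n \<and> S j \<subset> S (Suc j)}. U j \<subset> U (Suc j)) \<and>
      U (card {j. j<n \<and> S j \<subset> S (Suc j)}) = S n"
    using assms
  proof (induction n)
    case 0
    then show ?case by (intro exI[of _ "\<lambda>_. S 0"]) auto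
  next
    case (Suc n)
    let ?c = "card {j. j<n \<and> S j \<subset> S (Suc j)}"
    from Suc obtain U where U: "\<forall>j\<le>?c. P (U j)" "\<forall>j<?c. U j \<subset> U (Suc j)" "U ?c = S n" by auto
    show ?case
    proof (cases "S n \<subset> S (Suc n)")
      case True
      have eq: "{j. j<Suc n \<and> S j \<subset> S (Suc j)} = insert n {j. j<n \<and> S j \<subset> S (Suc j)}"
        using True by auto
      have c: "card {j. j<Suc n \<and> S j \<subset> S (Suc j)} = Suc ?c" unfolding eq by simp
      show ?thesis unfolding c
        apply (rule exI[of _ "U(Suc ?c := S (Suc n))"])
        using U True Suc.prems by (auto simp: less_Suc_eq le_Suc_eq)
    next
      case False
      then have "S n = S (Suc n)" using Suc.prems by auto
      have eq: "{j. j<Suc n \<and> S j \<subset> S (Suc j)} = {j. j<n \<and> S j \<subset> S (Suc j)}"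
        using False by (auto simp: less_Suc_eq)
      show ?thesis unfolding eq using U \<open>S n = S (Suc n)\<close> by auto
    qed
  qed
  then show ?thesis unfolding has_chain_def by blast
qed

definition inv_subspace :: "('x \<Rightarrow> 'k::field) set \<Rightarrow> 'e set \<Rightarrow> ('e \<Rightarrow> ('x \<Rightarrow> 'k) \<Rightarrow> ('x \<Rightarrow> 'k))
    \<Rightarrow> ('x \<Rightarrow> 'k) set \<Rightarrow> bool" where
  "inv_subspace X E F U \<longleftrightarrow> U \<subseteq> X \<and> is_subspace U \<and> (\<forall>e\<in>E. F e ` U \<subseteq> U)"

lemma esub_eq_inv_subspace: "esub V A s t Mv Ma j = inv_subspace (Mv j) (endos V A s t Mv Ma) (\<lambda>\<phi>. \<phi> j)"
  by (rule ext) (simp add: esub_def inv_subspace_def)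

lemma inv_subspace_image:
  assumes U: "inv_subspace X E F U" and h: "lin_on X h" "h ` X \<subseteq> Y"
    and eqv: "\<forall>e'\<in>E'. \<exists>e\<in>E. \<forall>x\<in>X. G e' (h x) = h (F e x)"
  shows "inv_subspace Y E' G (h ` U)"
  unfolding inv_subspace_def
proof (intro conjI ballI subsetI)
  have sub: "U \<subseteq> X" "is_subspace U" using U unfolding inv_subspace_def by auto
  show "is_subspace (h ` U)" using subspace_image[OF sub(2) lin_on_subset[OF h(1) sub(1)]] .
  show "y \<in> Y" if "y \<in> h ` U" for y using that sub h(2) by auto
  fix e' y assume e': "e' \<in> E'" and "y \<in> G e' ` h ` U"
  then obtain a where a: "a \<in> U" "y = G e' (h a)" by auto
  obtain e where e: "e \<in> E" "\<forall>x\<in>X. G e' (h x) = h (F e x)" using eqv e' by blast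
  have "F e a \<in> U" using U e(1) a(1) unfolding inv_subspace_def by blast
  then show "y \<in> h ` U" using a e sub by auto
qed

lemma inv_subspace_preimage:
  assumes X: "is_subspace X" "\<forall>e\<in>E. F e ` X \<subseteq> X" and h: "lin_on X h"
    and eqv: "\<forall>e\<in>E. \<exists>e'\<in>E'. \<forall>x\<in>X. h (F e x) = G e' (h x)"
    and W: "inv_subspace Y E' G W"
  shows "inv_subspace X E F {x\<in>X. h x \<in> W}"
  unfolding inv_subspace_def
proof (intro conjI ballI subsetI)
  show "is_subspace {x\<in>X. h x \<in> W}"
    using subspace_preimage[OF X(1) h] W unfolding inv_subspace_def by blast
  fix e y assume e: "e \<in> E" and "y \<in> F e ` {x\<in>X. h x \<in> W}"
  then obtain x where x: "x \<in> X" "h x \<in> W" "y = F e x" by auto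
  obtain e' where e': "e' \<in> E'" "\<forall>x\<in>X. h (F e x) = G e' (h x)" using eqv e by blast
  have "G e' (h x) \<in> W" using W e'(1) x(2) unfolding inv_subspace_def by blast
  then show "y \<in> {x\<in>X. h x \<in> W}" using X(2) e x e' by auto
qed auto

lemma preimage_psubset:
  assumes "h ` X = Y" "W \<subset> W'" "W' \<subseteq> Y"
  shows "{x\<in>X. h x \<in> W} \<subset> {x\<in>X. h x \<in> W'}"
proof -
  obtain y where y: "y \<in> W'" "y \<notin> W" using assms(2) by blast
  then obtain x where "x \<in> X" "h x = y" using assms(1,3) by blast
  then show ?thesis using y assms(2) by blast
qed

lemma inv_subspace_chain_iso:
  assumes X: "is_subspace X" "\<forall>e\<in>E. F e ` X \<subseteq> X" and h: "lin_on X h" "inj_on h X" "h ` X = Y"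
    and eq1: "\<forall>e\<in>E. \<exists>e'\<in>E'. \<forall>x\<in>X. h (F e x) = G e' (h x)"
    and eq2: "\<forall>e'\<in>E'. \<exists>e\<in>E. \<forall>x\<in>X. G e' (h x) = h (F e x)"
  shows "has_chain (inv_subspace X E F) n = has_chain (inv_subspace Y E' G) n"
proof
  assume "has_chain (inv_subspace X E F) n"
  then show "has_chain (inv_subspace Y E' G) n"
  proof (rule has_chain_transfer[where H="\<lambda>U. h ` U", rotated -1])
    show "inv_subspace Y E' G (h ` U)" if "inv_subspace X E F U" for U
      by (rule inv_subspace_image[OF that h(1) equalityD1[OF h(3)] eq2])
    show "h ` U \<subset> h ` U'" if "inv_subspace X E F U" "inv_subspace X E F U'" "U \<subset> U'" for U U'
      using that h(2) unfolding inv_subspace_def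
      by (metis inj_on_image_eq_iff inj_on_subset psubsetE psubsetI image_mono)
  qed
next
  assume "has_chain (inv_subspace Y E' G) n"
  then show "has_chain (inv_subspace X E F) n"
  proof (rule has_chain_transfer[where H="\<lambda>W. {x\<in>X. h x \<in> W}", rotated -1])
    show "inv_subspace X E F {x\<in>X. h x \<in> W}" if "inv_subspace Y E' G W" for W
      by (rule inv_subspace_preimage[OF X h(1) eq1 that])
    show "{x\<in>X. h x \<in> W} \<subset> {x\<in>X. h x \<in> W'}"
      if "inv_subspace Y E' G W" "inv_subspace Y E' G W'" "W \<subset> W'" for W W'
      using that preimage_psubset[OF h(3), of W W'] unfolding inv_subspace_def by blast
  qed
qed

lemma inv_subspace_cong:
  assumes "\<forall>e\<in>E. \<exists>e'\<in>E'. \<forall>x\<in>X. F e x = G e' x" "\<forall>e'\<in>E'. \<exists>e\<in>E. \<forall>x\<in>X. G e' x = F e x"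
  shows "inv_subspace X E F = inv_subspace X E' G"
proof (rule ext)
  fix U show "inv_subspace X E F U = inv_subspace X E' G U"
    unfolding inv_subspace_def using assms by (smt (verit, best) image_cong subset_eq)
qed

lemma finite_length_inv_subspace_subset:
  "K \<subseteq> X \<Longrightarrow> finite_length (inv_subspace X E F) \<Longrightarrow> finite_length (inv_subspace K E F)"
  by (erule finite_length_transfer, rule has_chain_transfer[of _ _ "\<lambda>U. U"])
     (auto simp: inv_subspace_def)

lemma finite_length_inv_subspace_image:
  assumes X: "is_subspace X" "\<forall>e\<in>E. F e ` X \<subseteq> X"
    and pi: "lin_on X \<pi>" "\<pi> ` X = Y"
    and eqv: "\<forall>e\<in>E. \<forall>x\<in>X. \<pi> (F e x) = G e (\<pi> x)"
    and finX: "finite_length (inv_subspace X E F)"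
  shows "finite_length (inv_subspace Y E G)"
proof (rule finite_length_transfer[OF finX])
  fix n assume "has_chain (inv_subspace Y E G) n"
  then show "has_chain (inv_subspace X E F) n"
  proof (rule has_chain_transfer[where H="\<lambda>W. {x\<in>X. \<pi> x \<in> W}", rotated -1])
    show "inv_subspace X E F {x\<in>X. \<pi> x \<in> W}" if "inv_subspace Y E G W" for W
      by (rule inv_subspace_preimage[OF X pi(1) _ that]) (use eqv in blast)
    show "{x\<in>X. \<pi> x \<in> W} \<subset> {x\<in>X. \<pi> x \<in> W'}"
      if "inv_subspace Y E G W" "inv_subspace Y E G W'" "W \<subset> W'" for W W'
      using that preimage_psubset[OF pi(2), of W W'] unfolding inv_subspace_def by blast
  qed
qed

lemma inv_subspace_zero_chain: "has_chain (inv_subspace {0::'x \<Rightarrow> 'k::field} E F) n \<Longrightarrow> n = 0"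
proof (rule ccontr)
  assume "has_chain (inv_subspace {0} E F) n" "n \<noteq> 0"
  then obtain U where U: "\<forall>j\<le>n. inv_subspace {0} E F (U j)" "\<forall>j<n. U j \<subset> U (Suc j)"
    unfolding has_chain_def by blast
  have "U j = {0}" if "j \<le> n" for j
    using U(1) that subspace_0[of "U j"] unfolding inv_subspace_def by blast
  then show False using U(2) \<open>n \<noteq> 0\<close> by (metis le0 less_imp_le_nat not_gr_zero order.irrefl Suc_leI)
qed

lemma inv_subspace_zero_length:
  assumes "\<forall>e\<in>E. F e 0 = 0"
  shows "finite_length (inv_subspace {0::'x \<Rightarrow> 'k::field} E F)" "mod_length (inv_subspace {0::'x \<Rightarrow> 'k} E F) = 0"
proof -
  show fin: "finite_length (inv_subspace {0::'x \<Rightarrow> 'k} E F)"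
    using inv_subspace_zero_chain by (metis finite_lengthI le_refl)
  have "inv_subspace {0} E F {0}" using assms subspace_zero unfolding inv_subspace_def by auto
  then show "mod_length (inv_subspace {0::'x \<Rightarrow> 'k} E F) = 0"
    using has_chain_mod_length[OF fin] inv_subspace_zero_chain by blast
qed

lemma subspace_eq_of_kernel_image_eq:
  assumes X: "is_subspace X" and pi: "lin_on X \<pi>"
    and U: "is_subspace U" "U \<subseteq> U'" and U': "is_subspace U'" "U' \<subseteq> X"
    and ker: "U \<inter> {x\<in>X. \<pi> x = 0} = U' \<inter> {x\<in>X. \<pi> x = 0}" and img: "\<pi> ` U = \<pi> ` U'"
  shows "U = U'"
proof
  show "U' \<subseteq> U"
  proof
    fix u assume u: "u \<in> U'"
    then obtain u' where u': "u' \<in> U" "\<pi> u = \<pi> u'" using img by (metis imageE imageI)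
    have "u' \<in> U'" "u' \<in> X" "u \<in> X" using u u' U U' by auto
    then have "u - u' \<in> U' \<inter> {x\<in>X. \<pi> x = 0}"
      using u u'(2) subspace_diff[OF U'(1)] subspace_diff[OF X] lin_diff[OF X pi] by auto
    then have "u - u' \<in> U" using ker by blast
    then show "u \<in> U" using subspace_add[OF U(1) _ u'(1)] by fastforce
  qed
qed (rule U(2))

locale short_exact =
  fixes X :: "('x \<Rightarrow> 'k::field) set" and Y :: "('y \<Rightarrow> 'k) set" and \<pi> :: "('x \<Rightarrow> 'k) \<Rightarrow> ('y \<Rightarrow> 'k)"
    and E :: "'e set" and F :: "'e \<Rightarrow> ('x \<Rightarrow> 'k) \<Rightarrow> ('x \<Rightarrow> 'k)" and G :: "'e \<Rightarrow> ('y \<Rightarrow> 'k) \<Rightarrow> ('y \<Rightarrow> 'k)"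
  assumes X: "is_subspace X" and FX: "\<forall>e\<in>E. F e ` X \<subseteq> X"
    and Y: "is_subspace Y" and pi: "lin_on X \<pi>" and pi_onto: "\<pi> ` X = Y"
    and G: "\<forall>e\<in>E. lin_on Y (G e)" and eqv: "\<forall>e\<in>E. \<forall>x\<in>X. \<pi> (F e x) = G e (\<pi> x)"
begin

definition "K = {x\<in>X. \<pi> x = 0}"

lemma K_subspace: "is_subspace K"
  unfolding K_def using subspace_preimage[OF X pi subspace_zero] by simp

lemma inv_subspace_K: "inv_subspace K E F K"
proof -
  have "F e x \<in> K" if "e \<in> E" "x \<in> K" for e x
    using that FX eqv G lin_0[OF Y] unfolding K_def by fastforce
  then show ?thesis using K_subspace unfolding inv_subspace_def by blast
qed

lemma inv_subspace_X: "inv_subspace X E F X"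
  using X FX unfolding inv_subspace_def by blast

lemma inv_subspace_image_Y: "inv_subspace X E F U \<Longrightarrow> inv_subspace Y E G (\<pi> ` U)"
proof -
  have "\<forall>e'\<in>E. \<exists>e\<in>E. \<forall>x\<in>X. G e' (\<pi> x) = \<pi> (F e x)" using eqv by metis
  then show "inv_subspace X E F U \<Longrightarrow> ?thesis" using inv_subspace_image[OF _ pi equalityD1[OF pi_onto]] by blast
qed

lemma inv_subspace_Y: "inv_subspace Y E G Y"
  using inv_subspace_image_Y[OF inv_subspace_X] pi_onto by simp

lemma inv_subspace_Int_K:
  assumes U: "inv_subspace X E F U"
  shows "inv_subspace K E F (U \<inter> K)"
  unfolding inv_subspace_def
proof (intro conjI ballI)
  show "is_subspace (U \<inter> K)" using U K_subspace subspace_Int unfolding inv_subspace_def by blast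
  fix e assume "e \<in> E"
  then have "F e ` U \<subseteq> U" "F e ` K \<subseteq> K" using U inv_subspace_K unfolding inv_subspace_def by blast+
  then show "F e ` (U \<inter> K) \<subseteq> U \<inter> K" by blast
qed blast

lemma inv_subspace_preimage_Y: "inv_subspace Y E G W \<Longrightarrow> inv_subspace X E F {x\<in>X. \<pi> x \<in> W}"
  using inv_subspace_preimage[OF X FX pi, of E G Y W] eqv by blast

text \<open>Along a strictly increasing chain in X, each step is strict either on the kernel
  part or on the image part.\<close>
lemma chain_le_length_sum:
  assumes finK: "finite_length (inv_subspace K E F)" and finY: "finite_length (inv_subspace Y E G)"
    and chain: "has_chain (inv_subspace X E F) n"
  shows "n \<le> mod_length (inv_subspace K E F) + mod_length (inv_subspace Y E G)"
proof -
  from chain obtain U where U: "\<forall>j\<le>n. inv_subspace X E F (U j)" "\<forall>j<n. U j \<subset> U (Suc j)"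
    unfolding has_chain_def by blast
  define A where "A j = U j \<inter> K" for j
  define B where "B j = \<pi> ` U j" for j
  have mono: "A j \<subseteq> A (Suc j)" "B j \<subseteq> B (Suc j)" if "j < n" for j
    using U(2) that unfolding A_def B_def by auto
  have step: "A j \<subset> A (Suc j) \<or> B j \<subset> B (Suc j)" if j: "j < n" for j
  proof (rule ccontr)
    assume "\<not> ?thesis"
    then have eq: "A j = A (Suc j)" "B j = B (Suc j)" using mono[OF j] by auto
    have "is_subspace (U j)" "U j \<subseteq> U (Suc j)" "is_subspace (U (Suc j))" "U (Suc j) \<subseteq> X"
      using U j unfolding inv_subspace_def by auto
    then have "U j = U (Suc j)"
      by (rule subspace_eq_of_kernel_image_eq[OF X pi]) (use eq in \<open>simp_all add: A_def B_def K_def\<close>)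
    then show False using U(2) j by auto
  qed
  have "has_chain (inv_subspace K E F) (card {j. j<n \<and> A j \<subset> A (Suc j)})"
    by (rule has_chain_strict_steps) (use U(1) mono inv_subspace_Int_K in \<open>simp_all add: A_def\<close>)
  moreover have "has_chain (inv_subspace Y E G) (card {j. j<n \<and> B j \<subset> B (Suc j)})"
    by (rule has_chain_strict_steps) (use U(1) mono inv_subspace_image_Y in \<open>simp_all add: B_def\<close>)
  ultimately have "card {j. j<n \<and> A j \<subset> A (Suc j)} \<le> mod_length (inv_subspace K E F)"
    "card {j. j<n \<and> B j \<subset> B (Suc j)} \<le> mod_length (inv_subspace Y E G)"
    using le_mod_length finK finY by blast+
  moreover have "n \<le> card {j. j<n \<and> A j \<subset> A (Suc j)} + card {j. j<n \<and> B j \<subset> B (Suc j)}"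
  proof -
    have "{..<n} \<subseteq> {j. j<n \<and> A j \<subset> A (Suc j)} \<union> {j. j<n \<and> B j \<subset> B (Suc j)}"
      using step by auto
    then have "card {..<n} \<le> card ({j. j<n \<and> A j \<subset> A (Suc j)} \<union> {j. j<n \<and> B j \<subset> B (Suc j)})"
      by (rule card_mono[rotated]) auto
    then show ?thesis using card_Un_le[of "{j. j<n \<and> A j \<subset> A (Suc j)}" "{j. j<n \<and> B j \<subset> B (Suc j)}"]
      by simp
  qed
  ultimately show ?thesis by linarith
qed

text \<open>A maximal chain of K followed by the preimage of a maximal chain of Y.\<close>
lemma has_chain_length_sum:
  assumes finK: "finite_length (inv_subspace K E F)" and finY: "finite_length (inv_subspace Y E G)"
  shows "has_chain (inv_subspace X E F) (mod_length (inv_subspace K E F) + mod_length (inv_subspace Y E G))"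
proof -
  let ?a = "mod_length (inv_subspace K E F)" and ?b = "mod_length (inv_subspace Y E G)"
  obtain CK where CK: "\<forall>j\<le>?a. inv_subspace K E F (CK j)" "\<forall>j<?a. CK j \<subset> CK (Suc j)"
    using has_chain_mod_length[OF finK inv_subspace_K] unfolding has_chain_def by blast
  obtain W where W: "\<forall>j\<le>?b. inv_subspace Y E G (W j)" "\<forall>j<?b. W j \<subset> W (Suc j)"
    using has_chain_mod_length[OF finY inv_subspace_Y] unfolding has_chain_def by blast
  define C where "C j = (if j \<le> ?a then CK j else {x\<in>X. \<pi> x \<in> W (j - ?a)})" for j
  have WY: "W j \<subseteq> Y" if "j \<le> ?b" for j using W(1) that unfolding inv_subspace_def by auto
  have "inv_subspace X E F (C j)" if "j \<le> ?a + ?b" for j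
  proof (cases "j \<le> ?a")
    case True
    then show ?thesis using CK(1) K_def unfolding C_def inv_subspace_def by auto
  next
    case False
    then show ?thesis unfolding C_def using inv_subspace_preimage_Y W(1) that by auto
  qed
  moreover have "C j \<subset> C (Suc j)" if j: "j < ?a + ?b" for j
  proof (cases "Suc j \<le> ?a")
    case True
    then show ?thesis unfolding C_def using CK by auto
  next
    case False
    show ?thesis
    proof (cases "j = ?a")
      case True
      have "0 \<in> W 0" using W(1) subspace_0 unfolding inv_subspace_def by blast
      have "CK ?a \<subseteq> K" using CK(1) unfolding inv_subspace_def by auto
      also have "K \<subseteq> {x\<in>X. \<pi> x \<in> W 0}" using \<open>0 \<in> W 0\<close> unfolding K_def by auto
      also have "\<dots> \<subset> {x\<in>X. \<pi> x \<in> W (Suc j - ?a)}"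
        using True j W(2) WY[of "Suc j - ?a"] preimage_psubset[OF pi_onto] by (simp add: Suc_diff_le)
      finally show ?thesis unfolding C_def using True by auto
    next
      case False
      then have "j > ?a" using \<open>\<not> Suc j \<le> ?a\<close> by auto
      then have "W (j - ?a) \<subset> W (Suc j - ?a)" using W(2) j by (simp add: Suc_diff_le)
      then show ?thesis unfolding C_def using \<open>j > ?a\<close> j WY[of "Suc j - ?a"] preimage_psubset[OF pi_onto]
        by auto
    qed
  qed
  ultimately show ?thesis unfolding has_chain_def by blast
qed

theorem length_additive:
  assumes "finite_length (inv_subspace K E F)" "finite_length (inv_subspace Y E G)"
  shows "finite_length (inv_subspace X E F)"
    and "mod_length (inv_subspace X E F) = mod_length (inv_subspace K E F) + mod_length (inv_subspace Y E G)"
proof -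
  show fin: "finite_length (inv_subspace X E F)"
    using chain_le_length_sum[OF assms] by (rule finite_lengthI)
  show "mod_length (inv_subspace X E F) = mod_length (inv_subspace K E F) + mod_length (inv_subspace Y E G)"
    using chain_le_length_sum[OF assms has_chain_mod_length[OF fin inv_subspace_X]]
      le_mod_length[OF fin has_chain_length_sum[OF assms]] by linarith
qed

end


section \<open>Direct sums indexed by arrows\<close>

lemma sum_fun_apply: "(\<Sum>a\<in>S. (f a :: 'x \<Rightarrow> 'b::comm_monoid_add)) x = (\<Sum>a\<in>S. f a x)"
  by (induction S rule: infinite_finite_induct) auto

lemma lam_sum: "(\<lambda>u. \<Sum>a\<in>S. (f a u :: 'b::comm_monoid_add)) = (\<Sum>a\<in>S. f a)"
  by (rule ext) (simp add: sum_fun_apply)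

definition arrow_sum :: "'a set \<Rightarrow> ('a \<Rightarrow> ('w \<Rightarrow> 'k::field) set) \<Rightarrow> ('a option \<times> 'w \<Rightarrow> 'k) set" where
  "arrow_sum S Z = {f. (\<forall>u. f (None, u) = 0) \<and> (\<forall>\<alpha>. \<alpha> \<notin> S \<longrightarrow> comp \<alpha> f = 0) \<and> (\<forall>\<alpha>\<in>S. comp \<alpha> f \<in> Z \<alpha>)}"

definition arrow_sum_map :: "'a set \<Rightarrow> ('a \<Rightarrow> ('w \<Rightarrow> 'k::field) \<Rightarrow> ('w \<Rightarrow> 'k)) \<Rightarrow> ('a option \<times> 'w \<Rightarrow> 'k) \<Rightarrow> ('a option \<times> 'w \<Rightarrow> 'k)" where
  "arrow_sum_map Sf g f = (\<lambda>(ob, u). case ob of None \<Rightarrow> 0 | Some \<alpha> \<Rightarrow> if \<alpha> \<in> Sf then g \<alpha> (comp \<alpha> f) u else 0)"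

lemma option_fun_eqI:
  assumes "\<And>u. f (None, u) = g (None, u)" "\<And>\<alpha>. comp \<alpha> f = comp \<alpha> g"
  shows "f = g"
proof -
  have "f (ob, u) = g (ob, u)" for ob u
  proof (cases ob)
    case None then show ?thesis using assms(1) by simp
  next
    case (Some \<alpha>) then show ?thesis using fun_cong[OF assms(2)[of \<alpha>], of u] by (simp add: comp_def)
  qed
  then show ?thesis by (intro ext) (metis prod.collapse)
qed

lemma comp_add[simp]: "comp \<alpha> (f + g) = comp \<alpha> f + comp \<alpha> g" by (auto simp: comp_def fun_eq_iff)
lemma comp_scale[simp]: "comp \<alpha> (\<lambda>x. c * f x) = (\<lambda>u. c * comp \<alpha> f u)" by (auto simp: comp_def)
lemma comp_zero[simp]: "comp \<alpha> 0 = 0" by (auto simp: comp_def fun_eq_iff)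
lemma comp_sum: "comp \<alpha> (\<Sum>a\<in>S. f a) = (\<Sum>a\<in>S. comp \<alpha> (f a))"
  by (rule ext) (simp add: comp_def sum_fun_apply)
lemma unemb_add[simp]: "unemb (f + g) = unemb f + unemb g" by (auto simp: unemb_def fun_eq_iff)
lemma unemb_scale[simp]: "unemb (\<lambda>x. c * f x) = (\<lambda>u. c * unemb f u)" by (auto simp: unemb_def)
lemma unemb_zero[simp]: "unemb 0 = 0" by (auto simp: unemb_def fun_eq_iff)
lemma emb_add[simp]: "emb (f + g) = emb f + (emb g :: 'a option \<times> 'w \<Rightarrow> 'k::field)"
  by (auto simp: emb_def fun_eq_iff split: option.splits)
lemma emb_scale[simp]: "emb (\<lambda>u. c * f u) = (\<lambda>x. c * (emb f :: 'a option \<times> 'w \<Rightarrow> 'k::field) x)"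
  by (auto simp: emb_def fun_eq_iff split: option.splits)
lemma emb_zero[simp]: "emb 0 = (0 :: 'a option \<times> 'w \<Rightarrow> 'k::field)"
  by (auto simp: emb_def fun_eq_iff split: option.splits)
lemma unemb_emb[simp]: "unemb (emb m) = m" by (auto simp: unemb_def emb_def)
lemma comp_emb[simp]: "comp \<alpha> (emb m) = 0" by (auto simp: comp_def emb_def fun_eq_iff)
lemma comp_inj_comp[simp]: "comp \<beta> (inj_comp \<alpha> z) = (if \<beta> = \<alpha> then z else 0)"
  by (auto simp: comp_def inj_comp_def fun_eq_iff)
lemma unemb_inj_comp[simp]: "unemb (inj_comp \<alpha> z) = 0"
  by (auto simp: unemb_def inj_comp_def fun_eq_iff)
lemma emb_inj: "emb m = emb m' \<Longrightarrow> m = m'"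
  by (metis unemb_emb)
lemma comp_arrow_sum_map[simp]: "comp \<alpha> (arrow_sum_map Sf g f) = (if \<alpha> \<in> Sf then g \<alpha> (comp \<alpha> f) else 0)"
  by (auto simp: comp_def arrow_sum_map_def fun_eq_iff)
lemma unemb_arrow_sum_map[simp]: "unemb (arrow_sum_map Sf g f) = 0"
  by (auto simp: unemb_def arrow_sum_map_def fun_eq_iff)

lemma lin_emb: "lin_on S (emb :: ('w \<Rightarrow> 'k::field) \<Rightarrow> ('a option \<times> 'w \<Rightarrow> 'k))"
  by (rule linI) auto
lemma lin_comp: "lin_on S (comp \<alpha> :: ('a option \<times> 'w \<Rightarrow> 'k::field) \<Rightarrow> _)"
  by (rule linI) auto

lemma arrow_sum_iff: "f \<in> arrow_sum S Z \<longleftrightarrow> unemb f = 0 \<and> (\<forall>\<alpha>. \<alpha> \<notin> S \<longrightarrow> comp \<alpha> f = 0) \<and> (\<forall>\<alpha>\<in>S. comp \<alpha> f \<in> Z \<alpha>)"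
  by (auto simp: arrow_sum_def unemb_def fun_eq_iff)

lemma arrow_sum_eqI:
  assumes "f \<in> arrow_sum S Z" "g \<in> arrow_sum S Z" "\<And>\<alpha>. \<alpha> \<in> S \<Longrightarrow> comp \<alpha> f = comp \<alpha> g"
  shows "f = g"
proof (rule option_fun_eqI)
  fix u show "f (None, u) = g (None, u)" using assms(1,2) unfolding arrow_sum_def by auto
next
  fix \<alpha> show "comp \<alpha> f = comp \<alpha> g" using assms unfolding arrow_sum_def by (cases "\<alpha> \<in> S") auto
qed

lemma subspace_arrow_sum: "(\<And>\<alpha>. \<alpha> \<in> S \<Longrightarrow> is_subspace (Z \<alpha>)) \<Longrightarrow> is_subspace (arrow_sum S Z)"
  by (rule subspaceI) (auto simp: arrow_sum_iff subspace_0 subspace_add subspace_scale)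

lemma inj_comp_arrow_sum: "(\<And>\<alpha>. \<alpha> \<in> S \<Longrightarrow> is_subspace (Z \<alpha>)) \<Longrightarrow> \<alpha> \<in> S \<Longrightarrow> z \<in> Z \<alpha> \<Longrightarrow> inj_comp \<alpha> z \<in> arrow_sum S Z"
  by (auto simp: arrow_sum_iff subspace_0)

lemma arrow_sum_decomp:
  assumes "finite S" "f \<in> arrow_sum S Z"
  shows "f = (\<Sum>\<alpha>\<in>S. inj_comp \<alpha> (comp \<alpha> f))"
proof (rule option_fun_eqI)
  fix u
  have "(\<Sum>\<alpha>\<in>S. inj_comp \<alpha> (comp \<alpha> f)) (None, u) = 0"
    by (simp add: sum_fun_apply inj_comp_def)
  then show "f (None, u) = (\<Sum>\<alpha>\<in>S. inj_comp \<alpha> (comp \<alpha> f)) (None, u)" using assms(2) unfolding arrow_sum_def by auto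
next
  fix \<beta>
  have "comp \<beta> (\<Sum>\<alpha>\<in>S. inj_comp \<alpha> (comp \<alpha> f)) = (\<Sum>\<alpha>\<in>S. (if \<beta> = \<alpha> then comp \<alpha> f else 0))"
    by (simp add: comp_sum)
  also have "\<dots> = (if \<beta> \<in> S then comp \<beta> f else 0)"
    using assms(1) by (simp add: sum.delta)
  also have "\<dots> = comp \<beta> f" using assms(2) unfolding arrow_sum_def by auto
  finally show "comp \<beta> f = comp \<beta> (\<Sum>\<alpha>\<in>S. inj_comp \<alpha> (comp \<alpha> f))" by simp
qed

lemma arrow_sum_map_mem:
  assumes "S \<subseteq> Sf" "\<And>\<alpha>. \<alpha> \<in> Sf \<Longrightarrow> is_subspace (Z \<alpha>)"
    "\<And>\<alpha>. \<alpha> \<in> Sf \<Longrightarrow> lin_on (Z \<alpha>) (g \<alpha>) \<and> g \<alpha> ` Z \<alpha> \<subseteq> Z \<alpha>"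
    "f \<in> arrow_sum S Z"
  shows "arrow_sum_map Sf g f \<in> arrow_sum S Z"
  unfolding arrow_sum_iff
proof (intro conjI allI impI ballI)
  show "unemb (arrow_sum_map Sf g f) = 0" by simp
  fix \<alpha> assume "\<alpha> \<notin> S"
  then have "comp \<alpha> f = 0" using assms(4) unfolding arrow_sum_iff by auto
  show "comp \<alpha> (arrow_sum_map Sf g f) = 0"
  proof (cases "\<alpha> \<in> Sf")
    case True
    then have "g \<alpha> 0 = 0" using assms(2,3) lin_0[of "Z \<alpha>" "g \<alpha>"] by blast
    then show ?thesis using \<open>comp \<alpha> f = 0\<close> True by simp
  qed simp
next
  fix \<alpha> assume "\<alpha> \<in> S"
  then show "comp \<alpha> (arrow_sum_map Sf g f) \<in> Z \<alpha>" using assms unfolding arrow_sum_iff by (auto simp: image_subset_iff)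
qed

lemma comp_arrow_sum_map_mem:
  assumes "S \<subseteq> Sf" "\<And>\<alpha>. \<alpha> \<in> Sf \<Longrightarrow> is_subspace (Z \<alpha>)"
    "\<And>\<alpha>. \<alpha> \<in> Sf \<Longrightarrow> lin_on (Z \<alpha>) (g \<alpha>) \<and> g \<alpha> ` Z \<alpha> \<subseteq> Z \<alpha>"
    "f \<in> arrow_sum S Z"
  shows "comp \<alpha> (arrow_sum_map Sf g f) = (if \<alpha> \<in> S then g \<alpha> (comp \<alpha> f) else 0)"
proof (cases "\<alpha> \<in> Sf - S")
  case True
  then have "g \<alpha> 0 = 0" using assms(2,3) lin_0 by blast
  then show ?thesis using True assms(4) unfolding arrow_sum_iff by auto
qed (use assms(1) in auto)

lemma lin_arrow_sum_map:
  assumes S: "S \<subseteq> Sf" and Z: "\<And>\<alpha>. \<alpha> \<in> Sf \<Longrightarrow> is_subspace (Z \<alpha>)"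
    and g: "\<And>\<alpha>. \<alpha> \<in> Sf \<Longrightarrow> lin_on (Z \<alpha>) (g \<alpha>) \<and> g \<alpha> ` Z \<alpha> \<subseteq> Z \<alpha>"
  shows "lin_on (arrow_sum S Z) (arrow_sum_map Sf g)"
proof -
  have sub: "is_subspace (arrow_sum S Z)" using S Z by (intro subspace_arrow_sum) blast
  have comp_eq: "comp \<alpha> (arrow_sum_map Sf g f) = (if \<alpha> \<in> S then g \<alpha> (comp \<alpha> f) else 0)"
    if "f \<in> arrow_sum S Z" for \<alpha> f
    using comp_arrow_sum_map_mem[of S Sf Z g f \<alpha>] S Z g that by blast
  have lin: "lin_on (Z \<alpha>) (g \<alpha>)" if "\<alpha> \<in> S" for \<alpha> using g S that by blast
  show ?thesis
  proof (rule linI)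
    fix x y assume x: "x \<in> arrow_sum S Z" and y: "y \<in> arrow_sum S Z"
    show "arrow_sum_map Sf g (x + y) = arrow_sum_map Sf g x + arrow_sum_map Sf g y"
    proof (rule option_fun_eqI)
      fix \<alpha> show "comp \<alpha> (arrow_sum_map Sf g (x + y)) = comp \<alpha> (arrow_sum_map Sf g x + arrow_sum_map Sf g y)"
        using comp_eq[OF subspace_add[OF sub x y]] comp_eq[OF x] comp_eq[OF y] lin_add[OF lin] x y
        by (simp add: arrow_sum_iff)
    qed (simp add: arrow_sum_map_def)
  next
    fix c x assume x: "x \<in> arrow_sum S Z"
    show "arrow_sum_map Sf g (\<lambda>u. c * x u) = (\<lambda>u. c * arrow_sum_map Sf g x u)"
    proof (rule option_fun_eqI)
      fix \<alpha> show "comp \<alpha> (arrow_sum_map Sf g (\<lambda>u. c * x u)) = comp \<alpha> (\<lambda>u. c * arrow_sum_map Sf g x u)"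
        using comp_eq[OF subspace_scale[OF sub x]] comp_eq[OF x] lin_scale[OF lin] x
        by (simp add: arrow_sum_iff)
    qed (simp add: arrow_sum_map_def)
  qed
qed

lemma arrow_sum_empty: "arrow_sum {} Z = {0}"
proof
  show "arrow_sum {} Z \<subseteq> {0}"
    by (auto simp: arrow_sum_iff intro!: option_fun_eqI simp del: zero_fun_lambda) (simp add: unemb_def fun_eq_iff)
qed (auto simp: arrow_sum_iff)

lemma comp_arrow_sum_onto:
  assumes "\<And>\<alpha>. \<alpha> \<in> S \<Longrightarrow> is_subspace (Z \<alpha>)" "\<beta> \<in> S"
  shows "comp \<beta> ` arrow_sum S Z = Z \<beta>"
proof
  show "Z \<beta> \<subseteq> comp \<beta> ` arrow_sum S Z"
  proof
    fix z assume "z \<in> Z \<beta>"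
    then have "inj_comp \<beta> z \<in> arrow_sum S Z" by (intro inj_comp_arrow_sum) (use assms in auto)
    then show "z \<in> comp \<beta> ` arrow_sum S Z" by (intro image_eqI[where x="inj_comp \<beta> z"]) simp_all
  qed
qed (use assms(2) in \<open>auto simp: arrow_sum_iff\<close>)

lemma short_exact_arrow_sum:
  assumes S: "S \<subseteq> Sf" "\<beta> \<in> S" and Z: "\<And>\<alpha>. \<alpha> \<in> Sf \<Longrightarrow> is_subspace (Z \<alpha>)"
    and g: "\<And>e \<alpha>. e \<in> E \<Longrightarrow> \<alpha> \<in> Sf \<Longrightarrow> lin_on (Z \<alpha>) (g e \<alpha>) \<and> g e \<alpha> ` Z \<alpha> \<subseteq> Z \<alpha>"
  shows "short_exact (arrow_sum S Z) (Z \<beta>) (comp \<beta>) E (\<lambda>e. arrow_sum_map Sf (g e)) (\<lambda>e. g e \<beta>)"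
proof
  show "is_subspace (arrow_sum S Z)" by (rule subspace_arrow_sum) (use Z S in blast)
  show "\<forall>e\<in>E. arrow_sum_map Sf (g e) ` arrow_sum S Z \<subseteq> arrow_sum S Z"
  proof (intro ballI subsetI)
    fix e y assume e: "e \<in> E" and "y \<in> arrow_sum_map Sf (g e) ` arrow_sum S Z"
    then obtain x where "x \<in> arrow_sum S Z" "y = arrow_sum_map Sf (g e) x" by blast
    then show "y \<in> arrow_sum S Z" using arrow_sum_map_mem[OF S(1) Z g[OF e]] by simp
  qed
  show "comp \<beta> ` arrow_sum S Z = Z \<beta>" by (rule comp_arrow_sum_onto) (use Z S in auto)
  show "\<forall>e\<in>E. lin_on (Z \<beta>) (g e \<beta>)" using g S by blast
  show "\<forall>e\<in>E. \<forall>x\<in>arrow_sum S Z. comp \<beta> (arrow_sum_map Sf (g e) x) = g e \<beta> (comp \<beta> x)"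
    using S by auto
qed (use Z S in \<open>auto intro: lin_comp\<close>)

lemma arrow_sum_length:
  fixes Z :: "'a \<Rightarrow> ('w \<Rightarrow> 'k::field) set" and g :: "'e \<Rightarrow> 'a \<Rightarrow> ('w \<Rightarrow> 'k) \<Rightarrow> ('w \<Rightarrow> 'k)"
  assumes fin: "finite Sf" and Z: "\<And>\<alpha>. \<alpha> \<in> Sf \<Longrightarrow> is_subspace (Z \<alpha>)"
    and g: "\<And>e \<alpha>. e \<in> E \<Longrightarrow> \<alpha> \<in> Sf \<Longrightarrow> lin_on (Z \<alpha>) (g e \<alpha>) \<and> g e \<alpha> ` Z \<alpha> \<subseteq> Z \<alpha>"
    and finZ: "\<And>\<alpha>. \<alpha> \<in> Sf \<Longrightarrow> finite_length (inv_subspace (Z \<alpha>) E (\<lambda>e. g e \<alpha>))"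
    and S: "S \<subseteq> Sf"
  shows "finite_length (inv_subspace (arrow_sum S Z) E (\<lambda>e. arrow_sum_map Sf (g e))) \<and>
     mod_length (inv_subspace (arrow_sum S Z) E (\<lambda>e. arrow_sum_map Sf (g e)))
       = (\<Sum>\<alpha>\<in>S. mod_length (inv_subspace (Z \<alpha>) E (\<lambda>e. g e \<alpha>)))"
proof -
  have "finite S" using fin S finite_subset by blast
  from this S show ?thesis
  proof (induction S rule: finite_subset_induct')
    case empty
    have "arrow_sum_map Sf (g e) 0 = 0" if e: "e \<in> E" for e
    proof -
      have "arrow_sum_map Sf (g e) 0 \<in> arrow_sum {} Z"
        by (rule arrow_sum_map_mem[OF empty_subsetI Z]) (use g[OF e] in \<open>auto simp: arrow_sum_empty\<close>)
      then show ?thesis by (simp add: arrow_sum_empty)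
    qed
    then have "\<forall>e\<in>E. arrow_sum_map Sf (g e) 0 = 0" by blast
    from inv_subspace_zero_length[where F="\<lambda>e. arrow_sum_map Sf (g e)", OF this]
    show ?case by (simp add: arrow_sum_empty)
  next
    case (insert \<beta> S)
    have \<beta>: "\<beta> \<in> Sf" and S_Sf: "insert \<beta> S \<subseteq> Sf" using insert by auto
    interpret ex: short_exact "arrow_sum (insert \<beta> S) Z" "Z \<beta>" "comp \<beta>" E
      "\<lambda>e. arrow_sum_map Sf (g e)" "\<lambda>e. g e \<beta>"
      by (rule short_exact_arrow_sum[where Z=Z and g=g, OF S_Sf insertI1]) (use Z g in auto)
    have K: "ex.K = arrow_sum S Z"
    proof
      show "ex.K \<subseteq> arrow_sum S Z" by (auto simp: ex.K_def arrow_sum_iff)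
      show "arrow_sum S Z \<subseteq> ex.K"
        using insert(4) subspace_0[OF Z[OF \<beta>]] by (auto simp: ex.K_def arrow_sum_iff)
    qed
    have IH: "finite_length (inv_subspace (arrow_sum S Z) E (\<lambda>e. arrow_sum_map Sf (g e)))"
      "mod_length (inv_subspace (arrow_sum S Z) E (\<lambda>e. arrow_sum_map Sf (g e)))
         = (\<Sum>\<alpha>\<in>S. mod_length (inv_subspace (Z \<alpha>) E (\<lambda>e. g e \<alpha>)))"
      using insert(5) by auto
    show ?case
      using ex.length_additive[unfolded K, OF IH(1) finZ[OF \<beta>]] IH(2) insert(1,4)
      by (simp add: add.commute)
  qed
qed


section \<open>Generic representations\<close>

lemma fadd_eq: "fadd x y = x + y" by (auto simp: fadd_def fun_eq_iff)
lemma fzero_eq: "fzero = 0" by (auto simp: fzero_def fun_eq_iff)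

definition subrep :: "'v set \<Rightarrow> ('v \<Rightarrow> ('w \<Rightarrow> 'k::field) set) \<Rightarrow> ('v \<Rightarrow> ('w \<Rightarrow> 'k) set) \<Rightarrow> ('v \<Rightarrow> 'w \<Rightarrow> 'k) set" where
  "subrep V Mv P = {x \<in> tot V Mv. \<forall>j\<in>V. x j \<in> P j}"

lemma fsubspace_subrep:
  assumes P: "\<And>j. j \<in> V \<Longrightarrow> is_subspace (P j) \<and> P j \<subseteq> Mv j"
  shows "fsubspace (subrep V Mv P)"
  unfolding fsubspace_def fadd_eq fzero_eq
proof (intro conjI ballI allI)
  show "0 \<in> subrep V Mv P" unfolding subrep_def tot_def using P subspace_0 by fastforce
  fix x y assume "x \<in> subrep V Mv P" "y \<in> subrep V Mv P"
  then show "x + y \<in> subrep V Mv P" unfolding subrep_def tot_def using P subspace_add by fastforce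
next
  fix c x assume "x \<in> subrep V Mv P"
  then show "fscale c x \<in> subrep V Mv P"
    unfolding subrep_def tot_def fscale_def using P subspace_scale by fastforce
qed

lemma subrep_single_vertex_psubset:
  assumes "j \<in> V" "U \<subset> U'" "U' \<subseteq> Mv j" "\<And>l. l \<in> V \<Longrightarrow> 0 \<in> Mv l"
  shows "subrep V Mv (\<lambda>l. if l = j then U else {0}) \<subset> subrep V Mv (\<lambda>l. if l = j then U' else {0})"
proof -
  obtain u where u: "u \<in> U'" "u \<notin> U" using assms(2) by blast
  have "(\<lambda>l. if l = j then u else 0) \<in> subrep V Mv (\<lambda>l. if l = j then U' else {0})"
    using assms u unfolding subrep_def tot_def by auto
  moreover have "(\<lambda>l. if l = j then u else 0) \<notin> subrep V Mv (\<lambda>l. if l = j then U else {0})"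
    using assms(1) u unfolding subrep_def by auto
  moreover have "subrep V Mv (\<lambda>l. if l = j then U else {0}) \<subseteq> subrep V Mv (\<lambda>l. if l = j then U' else {0})"
    using assms(2) unfolding subrep_def by auto
  ultimately show ?thesis by blast
qed

locale generic_rep =
  fixes V :: "'v set" and A :: "'a set" and s t :: "'a \<Rightarrow> 'v"
    and Mv :: "'v \<Rightarrow> ('w \<Rightarrow> 'k::field) set" and Ma :: "'a \<Rightarrow> ('w \<Rightarrow> 'k) \<Rightarrow> ('w \<Rightarrow> 'k)"
  assumes fq: "finite_quiver V A s t" and noc: "no_oriented_cycles V A s t"
    and gen: "generic V A s t Mv Ma"
begin

abbreviation "E \<equiv> endos V A s t Mv Ma"

lemma rep: "is_rep V A s t Mv Ma" using gen unfolding generic_def by auto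
lemma Mv_sub: "j \<in> V \<Longrightarrow> is_subspace (Mv j)" using rep unfolding is_rep_def by auto
lemma Mv_0: "j \<in> V \<Longrightarrow> 0 \<in> Mv j" using subspace_0[OF Mv_sub] by blast
lemma Ma_lin: "\<alpha> \<in> A \<Longrightarrow> lin_on (Mv (s \<alpha>)) (Ma \<alpha>)" using rep unfolding is_rep_def by auto
lemma Ma_into: "\<alpha> \<in> A \<Longrightarrow> x \<in> Mv (s \<alpha>) \<Longrightarrow> Ma \<alpha> x \<in> Mv (t \<alpha>)" using rep unfolding is_rep_def by auto
lemma st_V: "\<alpha> \<in> A \<Longrightarrow> s \<alpha> \<in> V" "\<alpha> \<in> A \<Longrightarrow> t \<alpha> \<in> V" using fq unfolding finite_quiver_def by auto
lemma finA: "finite A" using fq unfolding finite_quiver_def by auto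
lemma Ma_0: "\<alpha> \<in> A \<Longrightarrow> Ma \<alpha> 0 = 0" using lin_0[OF Mv_sub[OF st_V(1)] Ma_lin] by blast
lemma no_loop: "\<alpha> \<in> A \<Longrightarrow> s \<alpha> \<noteq> t \<alpha>"
proof
  assume a: "\<alpha> \<in> A" "s \<alpha> = t \<alpha>"
  then have "(\<lambda>x y. \<exists>\<alpha>\<in>A. s \<alpha> = x \<and> t \<alpha> = y)\<^sup>+\<^sup>+ (s \<alpha>) (s \<alpha>)" by (intro tranclp.r_into_trancl) auto
  then show False using noc unfolding no_oriented_cycles_def by blast
qed

lemma endo_lin: "\<phi> \<in> E \<Longrightarrow> j \<in> V \<Longrightarrow> lin_on (Mv j) (\<phi> j)" unfolding endos_def by auto
lemma endo_into: "\<phi> \<in> E \<Longrightarrow> j \<in> V \<Longrightarrow> x \<in> Mv j \<Longrightarrow> \<phi> j x \<in> Mv j" unfolding endos_def by auto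
lemma endo_comm: "\<phi> \<in> E \<Longrightarrow> \<alpha> \<in> A \<Longrightarrow> x \<in> Mv (s \<alpha>) \<Longrightarrow> \<phi> (t \<alpha>) (Ma \<alpha> x) = Ma \<alpha> (\<phi> (s \<alpha>) x)"
  unfolding endos_def by auto
lemma endo_0: "\<phi> \<in> E \<Longrightarrow> j \<in> V \<Longrightarrow> \<phi> j 0 = 0" using lin_0[OF Mv_sub endo_lin] by blast

lemma esub_tot_subrep:
  assumes P: "\<And>j. j \<in> V \<Longrightarrow> is_subspace (P j) \<and> P j \<subseteq> Mv j"
    and inv: "\<And>\<phi> j. \<phi> \<in> E \<Longrightarrow> j \<in> V \<Longrightarrow> \<phi> j ` P j \<subseteq> P j"
  shows "esub_tot V A s t Mv Ma (subrep V Mv P)"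
  unfolding esub_tot_def
proof (intro conjI ballI)
  show "subrep V Mv P \<subseteq> tot V Mv" unfolding subrep_def by auto
  show "fsubspace (subrep V Mv P)" by (rule fsubspace_subrep[OF P])
  fix \<phi> x assume \<phi>: "\<phi> \<in> E" and x: "x \<in> subrep V Mv P"
  then show "(\<lambda>j. if j \<in> V then \<phi> j (x j) else x j) \<in> subrep V Mv P"
    using endo_into[OF \<phi>] inv[OF \<phi>] unfolding subrep_def tot_def by (auto simp: image_subset_iff)
qed

text \<open>An E(M)-submodule U of M_j gives the E(M)-submodule of M that is U at j and zero
  elsewhere, so the length of M_j is bounded by the endo-length of M.\<close>
lemma finite_length_vertex:
  assumes j: "j \<in> V"
  shows "finite_length (inv_subspace (Mv j) E (\<lambda>\<phi>. \<phi> j))"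
proof (rule finite_length_transfer)
  show "finite_length (esub_tot V A s t Mv Ma)" using gen unfolding generic_def endo_finite_def by auto
  fix n assume "has_chain (inv_subspace (Mv j) E (\<lambda>\<phi>. \<phi> j)) n"
  then show "has_chain (esub_tot V A s t Mv Ma) n"
  proof (rule has_chain_transfer[where H="\<lambda>U. subrep V Mv (\<lambda>l. if l = j then U else {0})", rotated -1])
    fix U assume U: "inv_subspace (Mv j) E (\<lambda>\<phi>. \<phi> j) U"
    show "esub_tot V A s t Mv Ma (subrep V Mv (\<lambda>l. if l = j then U else {0}))"
    proof (rule esub_tot_subrep)
      show "is_subspace (if l = j then U else {0}) \<and> (if l = j then U else {0}) \<subseteq> Mv l" if "l \<in> V" for l
        using U subspace_zero Mv_0[OF that] unfolding inv_subspace_def by auto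
      show "\<phi> l ` (if l = j then U else {0}) \<subseteq> (if l = j then U else {0})" if "\<phi> \<in> E" "l \<in> V" for \<phi> l
        using U endo_0[OF that] that(1) unfolding inv_subspace_def by auto
    qed
  next
    fix U U' assume U': "inv_subspace (Mv j) E (\<lambda>\<phi>. \<phi> j) U'" and UU': "U \<subset> U'"
    have "U' \<subseteq> Mv j" using U' unfolding inv_subspace_def by blast
    then show "subrep V Mv (\<lambda>l. if l = j then U else {0}) \<subset> subrep V Mv (\<lambda>l. if l = j then U' else {0})"
      by (rule subrep_single_vertex_psubset[OF j UU' _ Mv_0])
  qed
qed

lemma ksub_subrep:
  assumes P: "\<And>j. j \<in> V \<Longrightarrow> is_subspace (P j) \<and> P j \<subseteq> Mv j"
    and arr: "\<And>\<alpha> x. \<alpha> \<in> A \<Longrightarrow> x \<in> P (s \<alpha>) \<Longrightarrow> Ma \<alpha> x \<in> P (t \<alpha>)"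
  shows "ksub V A s t Mv Ma (subrep V Mv P)"
  unfolding ksub_def
proof (intro conjI ballI)
  show "subrep V Mv P \<subseteq> tot V Mv" unfolding subrep_def by auto
  show "fsubspace (subrep V Mv P)" by (rule fsubspace_subrep[OF P])
  have P0: "0 \<in> P j" if "j \<in> V" for j using P[OF that] subspace_0 by blast
  fix x assume x: "x \<in> subrep V Mv P"
  show "(\<lambda>l. if l = j then x j else (\<lambda>_. 0)) \<in> subrep V Mv P" if "j \<in> V" for j
    using x P0 Mv_0 that unfolding subrep_def tot_def by auto
  fix \<alpha> assume \<alpha>: "\<alpha> \<in> A"
  have "Ma \<alpha> (x (s \<alpha>)) \<in> P (t \<alpha>)" using x st_V[OF \<alpha>] arr[OF \<alpha>] unfolding subrep_def by auto
  then show "(\<lambda>l. if l = t \<alpha> then Ma \<alpha> (x (s \<alpha>)) else (\<lambda>_. 0)) \<in> subrep V Mv P"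
    using P P0 Mv_0 st_V[OF \<alpha>] unfolding subrep_def tot_def by auto
qed

lemma subrep_nontrivial:
  assumes R: "\<And>j. j \<in> V \<Longrightarrow> is_subspace (R j) \<and> R j \<subseteq> Mv j" and j: "j \<in> V" "R j \<noteq> {0}"
  shows "subrep V Mv R \<noteq> {fzero}"
proof -
  have "0 \<in> R j" using R[OF j(1)] subspace_0 by blast
  then obtain r where r: "r \<in> R j" "r \<noteq> 0" using j(2) by blast
  have "(\<lambda>l. if l = j then r else 0) \<in> subrep V Mv R"
    using R r j subspace_0 unfolding subrep_def tot_def by auto
  moreover have "(\<lambda>l. if l = j then r else 0) \<noteq> fzero"
  proof
    assume "(\<lambda>l. if l = j then r else 0) = fzero"
    from fun_cong[OF this, of j] show False using r(2) by (simp add: fzero_def)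
  qed
  ultimately show ?thesis by auto
qed

lemma subrep_Int:
  assumes PQ: "\<And>j. j \<in> V \<Longrightarrow> P j \<inter> Q j = {0}"
  shows "subrep V Mv P \<inter> subrep V Mv Q = {fzero}"
proof
  show "subrep V Mv P \<inter> subrep V Mv Q \<subseteq> {fzero}"
  proof
    fix x assume x: "x \<in> subrep V Mv P \<inter> subrep V Mv Q"
    have "x l = 0" for l
    proof (cases "l \<in> V")
      case True
      then have "x l \<in> P l \<inter> Q l" using x unfolding subrep_def by blast
      then show ?thesis using PQ[OF True] by blast
    qed (use x in \<open>auto simp: subrep_def tot_def\<close>)
    then show "x \<in> {fzero}" unfolding fzero_eq by auto
  qed
  show "{fzero} \<subseteq> subrep V Mv P \<inter> subrep V Mv Q"
    using PQ Mv_0 unfolding fzero_eq subrep_def tot_def by auto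
qed

lemma tot_eq_subrep_sum:
  assumes P: "\<And>j. j \<in> V \<Longrightarrow> P j \<subseteq> Mv j" and Q: "\<And>j. j \<in> V \<Longrightarrow> Q j \<subseteq> Mv j"
    and sum: "\<And>j m. j \<in> V \<Longrightarrow> m \<in> Mv j \<Longrightarrow> \<exists>p\<in>P j. \<exists>q\<in>Q j. m = p + q"
  shows "tot V Mv = {fadd x y | x y. x \<in> subrep V Mv P \<and> y \<in> subrep V Mv Q}"
proof
  show "tot V Mv \<subseteq> {fadd x y | x y. x \<in> subrep V Mv P \<and> y \<in> subrep V Mv Q}"
  proof
    fix z assume z: "z \<in> tot V Mv"
    then have "\<forall>l\<in>V. \<exists>p\<in>P l. \<exists>q\<in>Q l. z l = p + q" using sum unfolding tot_def by blast
    then obtain p q where pq: "\<And>l. l \<in> V \<Longrightarrow> p l \<in> P l \<and> q l \<in> Q l \<and> z l = p l + q l"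
      by metis
    define x where "x l = (if l \<in> V then p l else 0)" for l
    define y where "y l = (if l \<in> V then q l else 0)" for l
    have "x \<in> subrep V Mv P" "y \<in> subrep V Mv Q"
      using pq P Q unfolding subrep_def tot_def x_def y_def by (auto simp: subset_iff)
    moreover have "z = fadd x y"
      using pq z unfolding fadd_eq x_def y_def tot_def by (auto simp: fun_eq_iff)
    ultimately show "z \<in> {fadd x y | x y. x \<in> subrep V Mv P \<and> y \<in> subrep V Mv Q}" by blast
  qed
  show "{fadd x y | x y. x \<in> subrep V Mv P \<and> y \<in> subrep V Mv Q} \<subseteq> tot V Mv"
    unfolding fadd_eq subrep_def tot_def by (auto intro!: subspace_add[OF Mv_sub])
qed

lemma compatible_splitting_trivial:
  assumes P: "\<And>j. j \<in> V \<Longrightarrow> is_subspace (P j) \<and> P j \<subseteq> Mv j"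
    and Q: "\<And>j. j \<in> V \<Longrightarrow> is_subspace (Q j) \<and> Q j \<subseteq> Mv j"
    and PQ: "\<And>j. j \<in> V \<Longrightarrow> P j \<inter> Q j = {0}"
    and sum: "\<And>j m. j \<in> V \<Longrightarrow> m \<in> Mv j \<Longrightarrow> \<exists>p\<in>P j. \<exists>q\<in>Q j. m = p + q"
    and arrP: "\<And>\<alpha> x. \<alpha> \<in> A \<Longrightarrow> x \<in> P (s \<alpha>) \<Longrightarrow> Ma \<alpha> x \<in> P (t \<alpha>)"
    and arrQ: "\<And>\<alpha> x. \<alpha> \<in> A \<Longrightarrow> x \<in> Q (s \<alpha>) \<Longrightarrow> Ma \<alpha> x \<in> Q (t \<alpha>)"
  shows "(\<forall>j\<in>V. P j = {0}) \<or> (\<forall>j\<in>V. Q j = {0})"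
proof (rule ccontr)
  assume "\<not> ?thesis"
  then obtain j1 j2 where j: "j1 \<in> V" "P j1 \<noteq> {0}" "j2 \<in> V" "Q j2 \<noteq> {0}" by auto
  have "indecomposable V A s t Mv Ma" using gen unfolding generic_def by auto
  moreover have "subrep V Mv P \<inter> subrep V Mv Q = {fzero}"
    using PQ by (rule subrep_Int)
  moreover have "tot V Mv = {fadd x y | x y. x \<in> subrep V Mv P \<and> y \<in> subrep V Mv Q}"
    using P Q sum by (intro tot_eq_subrep_sum) auto
  ultimately show False
    using ksub_subrep[OF P arrP] ksub_subrep[OF Q arrQ]
      subrep_nontrivial[OF P j(1,2)] subrep_nontrivial[OF Q j(3,4)]
    unfolding indecomposable_def by blast
qed

lemma splitting_at_vertex:
  assumes i: "i \<in> V" and L: "is_subspace L" "L \<subseteq> Mv i" and C: "is_subspace C" "C \<subseteq> Mv i"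
    and LC: "L \<inter> C = {0}" and sum: "\<And>m. m \<in> Mv i \<Longrightarrow> \<exists>l\<in>L. \<exists>c\<in>C. m = l + c"
    and arrL: "\<And>\<alpha> x. \<alpha> \<in> A \<Longrightarrow> x \<in> (if s \<alpha> = i then L else Mv (s \<alpha>)) \<Longrightarrow>
      Ma \<alpha> x \<in> (if t \<alpha> = i then L else Mv (t \<alpha>))"
    and arrC: "\<And>\<alpha> x. \<alpha> \<in> A \<Longrightarrow> s \<alpha> = i \<Longrightarrow> x \<in> C \<Longrightarrow> Ma \<alpha> x = 0"
  shows "C = {0} \<or> (L = {0} \<and> (\<forall>j\<in>V. j \<noteq> i \<longrightarrow> Mv j = {0}))"
proof -
  define P where "P j = (if j = i then L else Mv j)" for j
  define Q where "Q j = (if j = i then C else {0})" for j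
  have "(\<forall>j\<in>V. P j = {0}) \<or> (\<forall>j\<in>V. Q j = {0})"
  proof (rule compatible_splitting_trivial)
    show "is_subspace (P j) \<and> P j \<subseteq> Mv j" "is_subspace (Q j) \<and> Q j \<subseteq> Mv j" if "j \<in> V" for j
      unfolding P_def Q_def using L C subspace_zero Mv_sub Mv_0 that by auto
    show "P j \<inter> Q j = {0}" if "j \<in> V" for j unfolding P_def Q_def using LC Mv_0 that by auto
    show "\<exists>p\<in>P j. \<exists>q\<in>Q j. m = p + q" if "j \<in> V" "m \<in> Mv j" for j m
    proof (cases "j = i")
      case False
      then show ?thesis unfolding P_def Q_def using that(2) by (intro bexI[of _ m] bexI[of _ 0]) auto
    qed (use sum that in \<open>simp add: P_def Q_def\<close>)
    show "Ma \<alpha> x \<in> P (t \<alpha>)" if "\<alpha> \<in> A" "x \<in> P (s \<alpha>)" for \<alpha> x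
      using arrL that unfolding P_def by blast
    show "Ma \<alpha> x \<in> Q (t \<alpha>)" if \<alpha>: "\<alpha> \<in> A" and x: "x \<in> Q (s \<alpha>)" for \<alpha> x
    proof (cases "s \<alpha> = i")
      case True
      then show ?thesis using arrC[OF \<alpha> True] x subspace_0[OF C(1)] unfolding Q_def by auto
    qed (use x Ma_0[OF \<alpha>] subspace_0[OF C(1)] in \<open>auto simp: Q_def\<close>)
  qed
  then show ?thesis
  proof
    assume P0: "\<forall>j\<in>V. P j = {0}"
    have "Mv j = {0}" if "j \<in> V" "j \<noteq> i" for j using bspec[OF P0 that(1)] that(2) unfolding P_def by simp
    moreover have "L = {0}" using bspec[OF P0 i] unfolding P_def by simp
    ultimately show ?thesis by blast
  next
    assume "\<forall>j\<in>V. Q j = {0}"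
    then have "Q i = {0}" using i by blast
    then show ?thesis unfolding Q_def by simp
  qed
qed

lemma concentrated_Ma_zero:
  assumes z: "\<And>j. j \<in> V \<Longrightarrow> j \<noteq> i \<Longrightarrow> Mv j = {0}" and \<alpha>: "\<alpha> \<in> A" and x: "x \<in> Mv (s \<alpha>)"
  shows "Ma \<alpha> x = 0"
proof (cases "s \<alpha> = i")
  case True
  then have "t \<alpha> \<noteq> i" using no_loop[OF \<alpha>] by auto
  then show ?thesis using Ma_into[OF \<alpha> x] z st_V[OF \<alpha>] by blast
next
  case False
  then show ?thesis using x z st_V[OF \<alpha>] Ma_0[OF \<alpha>] by auto
qed

lemma concentrated_dim_le_one:
  assumes i: "i \<in> V" and z: "\<And>j. j \<in> V \<Longrightarrow> j \<noteq> i \<Longrightarrow> Mv j = {0}"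
    and ab: "a \<in> Mv i" "b \<in> Mv i" "a \<noteq> 0"
  shows "\<exists>c. b = (\<lambda>u. c * a u)"
proof -
  define L where "L = {(\<lambda>u. c * a u) | c. True}"
  have L: "is_subspace L" "L \<subseteq> Mv i" "a \<in> L"
    unfolding L_def using subspace_line[of a] subspace_scale[OF Mv_sub[OF i] ab(1)]
    by (auto intro!: exI[of _ 1])
  obtain C where C: "is_subspace C" "C \<subseteq> Mv i" "C \<inter> L = {0}" "\<And>w. w \<in> Mv i \<Longrightarrow> \<exists>c\<in>C. \<exists>l\<in>L. w = c + l"
    by (rule subspace_complementE[OF Mv_sub[OF i] L(1,2)]) (rule that)
  have "C = {0} \<or> (L = {0} \<and> (\<forall>j\<in>V. j \<noteq> i \<longrightarrow> Mv j = {0}))"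
  proof (rule splitting_at_vertex[OF i L(1,2) C(1,2)])
    show "L \<inter> C = {0}" using C(3) by blast
    show "\<exists>l\<in>L. \<exists>c\<in>C. m = l + c" if "m \<in> Mv i" for m using C(4)[OF that] by (metis add.commute)
    show "Ma \<alpha> x \<in> (if t \<alpha> = i then L else Mv (t \<alpha>))"
      if "\<alpha> \<in> A" "x \<in> (if s \<alpha> = i then L else Mv (s \<alpha>))" for \<alpha> x
    proof -
      have "x \<in> Mv (s \<alpha>)" using that(2) L(2) by (auto split: if_splits)
      then have "Ma \<alpha> x = 0" using concentrated_Ma_zero[OF z that(1)] by blast
      then show ?thesis using subspace_0[OF L(1)] Mv_0[OF st_V(2)[OF that(1)]] by simp
    qed
    show "Ma \<alpha> x = 0" if "\<alpha> \<in> A" "s \<alpha> = i" "x \<in> C" for \<alpha> x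
      using concentrated_Ma_zero[OF z that(1)] C(2) that by auto
  qed
  then show ?thesis
  proof
    assume "C = {0}"
    then have "b \<in> L" using C(4)[OF ab(2)] by auto
    then show ?thesis unfolding L_def by auto
  qed (use L(3) ab(3) in auto)
qed

lemma concentrated_finite_length:
  assumes i: "i \<in> V" and z: "\<And>j. j \<in> V \<Longrightarrow> j \<noteq> i \<Longrightarrow> Mv j = {0}"
  shows "finite_length (ksub V A s t Mv Ma)"
proof (rule finite_lengthI)
  have totc: "x l = 0" if "x \<in> tot V Mv" "l \<noteq> i" for x l
    using that z unfolding tot_def by (cases "l \<in> V") auto
  fix n assume "has_chain (ksub V A s t Mv Ma) n"
  then obtain U where U: "\<forall>j\<le>n. ksub V A s t Mv Ma (U j)" "\<forall>j<n. U j \<subset> U (Suc j)"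
    unfolding has_chain_def by blast
  show "n \<le> 1"
  proof (rule ccontr)
    assume "\<not> n \<le> 1"
    then have fs: "fsubspace (U j)" "U j \<subseteq> tot V Mv" if "j \<le> 2" for j
      using U(1) that unfolding ksub_def by auto
    have "U 0 \<subset> U 1" "U 1 \<subset> U 2" using U(2) \<open>\<not> n \<le> 1\<close> by (auto simp: numeral_2_eq_2)
    then obtain x y where x: "x \<in> U 1" "x \<notin> U 0" and y: "y \<in> U 2" "y \<notin> U 1" by blast
    have "x \<noteq> 0" using x fs(1)[of 0] unfolding fsubspace_def by (auto simp: fzero_eq)
    have xt: "x \<in> tot V Mv" and yt: "y \<in> tot V Mv" using x y fs(2)[of 1] fs(2)[of 2] by auto
    have "x i \<noteq> 0"
    proof
      assume "x i = 0"
      then have "x = 0" using totc[OF xt] by (auto simp: fun_eq_iff) (metis zero_fun_apply)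
      then show False using \<open>x \<noteq> 0\<close> by simp
    qed
    then obtain c where c: "y i = (\<lambda>u. c * x i u)"
      using concentrated_dim_le_one[OF i z] xt yt i unfolding tot_def by blast
    have "y = fscale c x"
    proof
      fix l show "y l = fscale c x l"
        using c totc[OF xt] totc[OF yt] unfolding fscale_def by (cases "l = i") auto
    qed
    moreover have "fscale c x \<in> U 1" using fs(1)[of 1] x unfolding fsubspace_def by auto
    ultimately show False using y by auto
  qed
qed

lemma not_concentrated:
  assumes "i \<in> V" "\<And>j. j \<in> V \<Longrightarrow> j \<noteq> i \<Longrightarrow> Mv j = {0}"
  shows False
  using concentrated_finite_length[OF assms] gen unfolding generic_def by auto

end


section \<open>Reflection at a vertex\<close>

text \<open>A linear endomorphism T of X preserving the kernel of a surjection \<pi>: X \<rightarrow> Y induces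
  an endomorphism of Y; one preserving the image of an injection \<iota>: Y \<rightarrow> X restricts to Y.\<close>
definition quotient_map :: "('x \<Rightarrow> 'k) set \<Rightarrow> (('x \<Rightarrow> 'k) \<Rightarrow> ('y \<Rightarrow> 'k)) \<Rightarrow> (('x \<Rightarrow> 'k) \<Rightarrow> ('x \<Rightarrow> 'k))
    \<Rightarrow> ('y \<Rightarrow> 'k) \<Rightarrow> ('y \<Rightarrow> 'k)" where
  "quotient_map X \<pi> T y = \<pi> (T (SOME p. p \<in> X \<and> \<pi> p = y))"

definition restriction_map :: "('y \<Rightarrow> 'k) set \<Rightarrow> (('y \<Rightarrow> 'k) \<Rightarrow> ('x \<Rightarrow> 'k)) \<Rightarrow> (('x \<Rightarrow> 'k) \<Rightarrow> ('x \<Rightarrow> 'k))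
    \<Rightarrow> ('y \<Rightarrow> 'k) \<Rightarrow> ('y \<Rightarrow> 'k)" where
  "restriction_map Y \<iota> T y = (THE y'. y' \<in> Y \<and> \<iota> y' = T (\<iota> y))"

context
  fixes X :: "('x \<Rightarrow> 'k::field) set" and \<pi> :: "('x \<Rightarrow> 'k) \<Rightarrow> ('y \<Rightarrow> 'k)" and T
  assumes X: "is_subspace X" and pi: "lin_on X \<pi>" and T: "lin_on X T" "T ` X \<subseteq> X"
    and ker: "\<forall>x\<in>X. \<pi> x = 0 \<longrightarrow> \<pi> (T x) = 0"
begin

lemma quotient_map_eq: "p \<in> X \<Longrightarrow> quotient_map X \<pi> T (\<pi> p) = \<pi> (T p)"
proof -
  assume p: "p \<in> X"
  let ?p0 = "SOME q. q \<in> X \<and> \<pi> q = \<pi> p"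
  have p0: "?p0 \<in> X" "\<pi> ?p0 = \<pi> p" using someI[of "\<lambda>q. q \<in> X \<and> \<pi> q = \<pi> p" p] p by auto
  have T_mem: "T p \<in> X" "T ?p0 \<in> X" using T(2) p p0(1) by auto
  have "\<pi> (p - ?p0) = 0" using lin_diff[OF X pi p p0(1)] p0(2) by simp
  then have "\<pi> (T (p - ?p0)) = 0" using ker subspace_diff[OF X p p0(1)] by blast
  then have "\<pi> (T p) - \<pi> (T ?p0) = 0"
    using lin_diff[OF X T(1) p p0(1)] lin_diff[OF X pi T_mem] by simp
  then show ?thesis unfolding quotient_map_def by simp
qed

lemma lin_quotient_map: "lin_on (\<pi> ` X) (quotient_map X \<pi> T)"
proof (rule linI)
  fix x y assume "x \<in> \<pi> ` X" "y \<in> \<pi> ` X"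
  then obtain p q where pq: "p \<in> X" "q \<in> X" "x = \<pi> p" "y = \<pi> q" by blast
  then have "x + y = \<pi> (p + q)" "p + q \<in> X" using lin_add[OF pi] subspace_add[OF X] by auto
  then have "quotient_map X \<pi> T (x + y) = \<pi> (T (p + q))" using quotient_map_eq by simp
  also have "\<dots> = \<pi> (T p) + \<pi> (T q)"
    using lin_add[OF T(1) pq(1,2)] lin_add[OF pi] T(2) pq(1,2) by auto
  finally show "quotient_map X \<pi> T (x + y) = quotient_map X \<pi> T x + quotient_map X \<pi> T y"
    using quotient_map_eq pq by simp
next
  fix c x assume "x \<in> \<pi> ` X"
  then obtain p where p: "p \<in> X" "x = \<pi> p" by blast
  then have "(\<lambda>u. c * x u) = \<pi> (\<lambda>u. c * p u)" "(\<lambda>u. c * p u) \<in> X"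
    using lin_scale[OF pi] subspace_scale[OF X] by auto
  then have "quotient_map X \<pi> T (\<lambda>u. c * x u) = \<pi> (T (\<lambda>u. c * p u))" using quotient_map_eq by simp
  also have "\<dots> = (\<lambda>u. c * \<pi> (T p) u)"
    using lin_scale[OF T(1) p(1)] lin_scale[OF pi] T(2) p(1) by auto
  finally show "quotient_map X \<pi> T (\<lambda>u. c * x u) = (\<lambda>u. c * quotient_map X \<pi> T x u)"
    using quotient_map_eq p by simp
qed

lemma quotient_map_into: "quotient_map X \<pi> T ` \<pi> ` X \<subseteq> \<pi> ` X"
  using quotient_map_eq T(2) by auto

end

context
  fixes Y :: "('y \<Rightarrow> 'k::field) set" and \<iota> :: "('y \<Rightarrow> 'k) \<Rightarrow> ('x \<Rightarrow> 'k)" and X T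
  assumes Y: "is_subspace Y" and iota: "lin_on Y \<iota>" "inj_on \<iota> Y" "\<iota> ` Y \<subseteq> X"
    and T: "lin_on X T" and img: "T ` \<iota> ` Y \<subseteq> \<iota> ` Y"
begin

lemma restriction_map:
  assumes y: "y \<in> Y"
  shows "restriction_map Y \<iota> T y \<in> Y" "\<iota> (restriction_map Y \<iota> T y) = T (\<iota> y)"
proof -
  have "T (\<iota> y) \<in> \<iota> ` Y" using img y by blast
  then obtain y' where y': "y' \<in> Y" "\<iota> y' = T (\<iota> y)" by (metis imageE)
  have "restriction_map Y \<iota> T y = y'" unfolding restriction_map_def
  proof (rule the_equality)
    fix z assume "z \<in> Y \<and> \<iota> z = T (\<iota> y)"
    then show "z = y'" using y' inj_onD[OF iota(2)] by metis
  qed (use y' in simp)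
  then show "restriction_map Y \<iota> T y \<in> Y" "\<iota> (restriction_map Y \<iota> T y) = T (\<iota> y)" using y' by auto
qed

lemma lin_restriction_map: "lin_on Y (restriction_map Y \<iota> T)"
proof (rule linI)
  let ?r = "restriction_map Y \<iota> T"
  fix x y assume xy: "x \<in> Y" "y \<in> Y"
  have r: "?r x \<in> Y" "?r y \<in> Y" "?r (x + y) \<in> Y" "?r x + ?r y \<in> Y"
    using restriction_map(1) subspace_add[OF Y] xy by auto
  have "\<iota> (?r (x + y)) = T (\<iota> x + \<iota> y)"
    using restriction_map(2)[OF subspace_add[OF Y xy]] lin_add[OF iota(1) xy] by simp
  also have "\<dots> = \<iota> (?r x) + \<iota> (?r y)"
    using lin_add[OF T, of "\<iota> x" "\<iota> y"] iota(3) xy restriction_map(2) by auto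
  also have "\<dots> = \<iota> (?r x + ?r y)" using lin_add[OF iota(1) r(1,2)] by simp
  finally show "?r (x + y) = ?r x + ?r y" using inj_onD[OF iota(2)] r(3,4) by blast
next
  let ?r = "restriction_map Y \<iota> T"
  fix c x assume x: "x \<in> Y"
  have r: "?r x \<in> Y" "?r (\<lambda>u. c * x u) \<in> Y" "(\<lambda>u. c * ?r x u) \<in> Y"
    using restriction_map(1) subspace_scale[OF Y] x by auto
  have "\<iota> (?r (\<lambda>u. c * x u)) = T (\<lambda>u. c * \<iota> x u)"
    using restriction_map(2)[OF subspace_scale[OF Y x]] lin_scale[OF iota(1) x] by simp
  also have "\<dots> = (\<lambda>u. c * \<iota> (?r x) u)"
    using lin_scale[OF T, of "\<iota> x"] iota(3) x restriction_map(2) by auto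
  also have "\<dots> = \<iota> (\<lambda>u. c * ?r x u)" using lin_scale[OF iota(1) r(1)] by simp
  finally show "?r (\<lambda>u. c * x u) = (\<lambda>u. c * ?r x u)" using inj_onD[OF iota(2)] r(2,3) by blast
qed

end

lemma lin_conj_emb:
  fixes g :: "('w \<Rightarrow> 'k::field) \<Rightarrow> ('w \<Rightarrow> 'k)"
  assumes l: "lin_on S g"
  shows "lin_on (emb ` S) ((\<lambda>f. emb (g (unemb f))) :: ('a option \<times> 'w \<Rightarrow> 'k) \<Rightarrow> _)"
proof (rule linI, goal_cases)
  case (1 x y)
  then obtain a b where ab: "a \<in> S" "b \<in> S" "x = emb a" "y = emb b" by blast
  show ?case using ab lin_add[OF l ab(1,2)] by simp
next
  case (2 c x)
  then obtain a where a: "a \<in> S" "x = emb a" by blast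
  show ?case using a lin_scale[OF l a(1)] by simp
qed

text \<open>What the reflection functors at a sink and at a source i have in common: away from i
  the reflected representation is an embedded copy of M, and the relevant direct sum is
  that of the M_j over the arrows incident with i, j being the other endpoint.\<close>
locale vertex_reflection = generic_rep V A s t Mv Ma
  for V :: "'v set" and A :: "'a set" and s t :: "'a \<Rightarrow> 'v"
    and Mv :: "'v \<Rightarrow> ('w \<Rightarrow> 'k::field) set" and Ma :: "'a \<Rightarrow> ('w \<Rightarrow> 'k) \<Rightarrow> ('w \<Rightarrow> 'k)" +
  fixes i :: 'v
    and Nv :: "'v \<Rightarrow> ('a option \<times> 'w \<Rightarrow> 'k) set"
    and Na :: "'a \<Rightarrow> ('a option \<times> 'w \<Rightarrow> 'k) \<Rightarrow> ('a option \<times> 'w \<Rightarrow> 'k)"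
  assumes i_V: "i \<in> V"
    and Nv_off: "j \<noteq> i \<Longrightarrow> Nv j = emb ` Mv j"
    and Na_off: "s \<alpha> \<noteq> i \<Longrightarrow> t \<alpha> \<noteq> i \<Longrightarrow> Na \<alpha> f = emb (Ma \<alpha> (unemb f))"
begin

abbreviation "E' \<equiv> endos V A (rev_s i s t) (rev_t i s t) Nv Na"

definition "incident = {\<alpha>\<in>A. s \<alpha> = i \<or> t \<alpha> = i}"
definition "other \<alpha> = (if s \<alpha> = i then t \<alpha> else s \<alpha>)"
definition "X = arrow_sum incident (\<lambda>\<alpha>. Mv (other \<alpha>))"
definition "D \<phi> = arrow_sum_map incident (\<lambda>\<alpha>. \<phi> (other \<alpha>))"

definition "off_i_endo \<phi> \<longleftrightarrow> (\<forall>j\<in>V. j \<noteq> i \<longrightarrow> lin_on (Mv j) (\<phi> j) \<and> \<phi> j ` Mv j \<subseteq> Mv j)"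

lemma incident_A: "\<alpha> \<in> incident \<Longrightarrow> \<alpha> \<in> A" unfolding incident_def by auto
lemma finite_incident: "finite incident" unfolding incident_def using finA by auto
lemma other_V: "\<alpha> \<in> incident \<Longrightarrow> other \<alpha> \<in> V"
  unfolding incident_def other_def using st_V by auto
lemma other_ne: "\<alpha> \<in> incident \<Longrightarrow> other \<alpha> \<noteq> i"
  unfolding incident_def other_def using no_loop by (cases "s \<alpha> = i") force+
lemma Mv_other_sub: "\<alpha> \<in> incident \<Longrightarrow> is_subspace (Mv (other \<alpha>))"
  using Mv_sub other_V by blast

lemma rev_incident: "\<alpha> \<in> incident \<Longrightarrow> rev_s i s t \<alpha> = t \<alpha> \<and> rev_t i s t \<alpha> = s \<alpha>"
  unfolding rev_s_def rev_t_def incident_def by auto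
lemma rev_off: "s \<alpha> \<noteq> i \<Longrightarrow> t \<alpha> \<noteq> i \<Longrightarrow> rev_s i s t \<alpha> = s \<alpha> \<and> rev_t i s t \<alpha> = t \<alpha>"
  unfolding rev_s_def rev_t_def by auto

lemma X_sub: "is_subspace X" unfolding X_def by (rule subspace_arrow_sum) (rule Mv_other_sub)
lemma X_comp: "f \<in> X \<Longrightarrow> \<alpha> \<in> incident \<Longrightarrow> comp \<alpha> f \<in> Mv (other \<alpha>)"
  unfolding X_def arrow_sum_iff by auto
lemma inj_comp_X: "\<alpha> \<in> incident \<Longrightarrow> m \<in> Mv (other \<alpha>) \<Longrightarrow> inj_comp \<alpha> m \<in> X"
  unfolding X_def by (rule inj_comp_arrow_sum) (auto intro: Mv_other_sub)

lemma E_off_i_endo: "\<phi> \<in> E \<Longrightarrow> off_i_endo \<phi>" unfolding off_i_endo_def endos_def by auto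

lemma off_i_endo_other:
  "off_i_endo \<phi> \<Longrightarrow> \<alpha> \<in> incident \<Longrightarrow> lin_on (Mv (other \<alpha>)) (\<phi> (other \<alpha>)) \<and> \<phi> (other \<alpha>) ` Mv (other \<alpha>) \<subseteq> Mv (other \<alpha>)"
  unfolding off_i_endo_def using other_V other_ne by blast

lemma D_X: "off_i_endo \<phi> \<Longrightarrow> f \<in> X \<Longrightarrow> D \<phi> f \<in> X"
  unfolding D_def X_def by (rule arrow_sum_map_mem[OF subset_refl Mv_other_sub off_i_endo_other])

lemma lin_D: "off_i_endo \<phi> \<Longrightarrow> lin_on X (D \<phi>)"
  unfolding D_def X_def by (rule lin_arrow_sum_map[OF subset_refl Mv_other_sub off_i_endo_other])

lemma D_inj_comp:
  assumes \<phi>: "off_i_endo \<phi>" and \<alpha>: "\<alpha> \<in> incident" and m: "m \<in> Mv (other \<alpha>)"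
  shows "D \<phi> (inj_comp \<alpha> m) = inj_comp \<alpha> (\<phi> (other \<alpha>) m)"
proof (rule arrow_sum_eqI[where S=incident and Z="\<lambda>\<alpha>. Mv (other \<alpha>)"])
  show "D \<phi> (inj_comp \<alpha> m) \<in> arrow_sum incident (\<lambda>\<alpha>. Mv (other \<alpha>))"
    using D_X[OF \<phi> inj_comp_X[OF \<alpha> m]] unfolding X_def .
  show "inj_comp \<alpha> (\<phi> (other \<alpha>) m) \<in> arrow_sum incident (\<lambda>\<alpha>. Mv (other \<alpha>))"
    using inj_comp_X[OF \<alpha>] off_i_endo_other[OF \<phi> \<alpha>] m unfolding X_def by blast
  fix \<beta> assume \<beta>: "\<beta> \<in> incident"
  have "\<phi> (other \<beta>) 0 = 0" using off_i_endo_other[OF \<phi> \<beta>] lin_0 Mv_other_sub[OF \<beta>] by blast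
  then show "comp \<beta> (D \<phi> (inj_comp \<alpha> m)) = comp \<beta> (inj_comp \<alpha> (\<phi> (other \<alpha>) m))"
    unfolding D_def using \<alpha> \<beta> by simp
qed

lemma length_X:
  "finite_length (inv_subspace X E D) \<and>
   mod_length (inv_subspace X E D) = (\<Sum>\<alpha>\<in>incident. mod_length (inv_subspace (Mv (other \<alpha>)) E (\<lambda>\<phi>. \<phi> (other \<alpha>))))"
  unfolding X_def D_def
  by (rule arrow_sum_length[OF finite_incident Mv_other_sub _ _ subset_refl])
    (use off_i_endo_other E_off_i_endo finite_length_vertex other_V in auto)

lemma E'_D:
  assumes "\<psi> \<in> E'"
  shows "\<And>j. j \<in> V \<Longrightarrow> lin_on (Nv j) (\<psi> j)"
    and "\<And>j x. j \<in> V \<Longrightarrow> x \<in> Nv j \<Longrightarrow> \<psi> j x \<in> Nv j"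
    and "\<And>\<alpha> x. \<alpha> \<in> A \<Longrightarrow> x \<in> Nv (rev_s i s t \<alpha>) \<Longrightarrow> \<psi> (rev_t i s t \<alpha>) (Na \<alpha> x) = Na \<alpha> (\<psi> (rev_s i s t \<alpha>) x)"
  using assms unfolding endos_def by auto

text \<open>Endomorphisms of M and of the reflected representation correspond to each other
  away from i; at i the correspondence is given separately for a sink and for a source.\<close>
definition "lift_endo \<phi> \<Phi> j = (if j = i then \<Phi> else (\<lambda>f. emb (\<phi> j (unemb f))))"
definition "lower_endo \<psi> j m = unemb (\<psi> j (emb m))"
definition "lower_endo_at \<psi> \<Psi> j = (if j = i then \<Psi> else lower_endo \<psi> j)"

lemma lower_endo_emb:
  assumes \<psi>: "\<psi> \<in> E'" and j: "j \<in> V" "j \<noteq> i" and m: "m \<in> Mv j"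
  shows "\<psi> j (emb m) = emb (lower_endo \<psi> j m)" and "lower_endo \<psi> j m \<in> Mv j"
proof -
  have "\<psi> j (emb m) \<in> emb ` Mv j" using E'_D(2)[OF \<psi> j(1)] Nv_off[OF j(2)] m by blast
  then obtain m' where "m' \<in> Mv j" "\<psi> j (emb m) = emb m'" by blast
  then show "\<psi> j (emb m) = emb (lower_endo \<psi> j m)" "lower_endo \<psi> j m \<in> Mv j"
    unfolding lower_endo_def by simp_all
qed

lemma off_i_endo_lower_endo: "\<psi> \<in> E' \<Longrightarrow> off_i_endo (lower_endo \<psi>)"
  unfolding off_i_endo_def
proof (intro ballI impI conjI)
  fix j assume \<psi>: "\<psi> \<in> E'" and j: "j \<in> V" "j \<noteq> i"
  have l: "lin_on (emb ` Mv j) (\<psi> j)" using E'_D(1)[OF \<psi> j(1)] Nv_off[OF j(2)] by simp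
  show "lin_on (Mv j) (lower_endo \<psi> j)"
  proof (rule linI)
    fix x y assume "x \<in> Mv j" "y \<in> Mv j"
    then show "lower_endo \<psi> j (x + y) = lower_endo \<psi> j x + lower_endo \<psi> j y"
      unfolding lower_endo_def using lin_add[OF l, of "emb x" "emb y"] by simp
  next
    fix c x assume "x \<in> Mv j"
    then show "lower_endo \<psi> j (\<lambda>u. c * x u) = (\<lambda>u. c * lower_endo \<psi> j x u)"
      unfolding lower_endo_def using lin_scale[OF l, of "emb x" c] by simp
  qed
  show "lower_endo \<psi> j ` Mv j \<subseteq> Mv j" using lower_endo_emb(2)[OF \<psi> j] by blast
qed

lemma D_lower_endo_at: "D (lower_endo_at \<psi> \<Psi>) = D (lower_endo \<psi>)"
  unfolding D_def lower_endo_at_def arrow_sum_map_def using other_ne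
  by (intro ext) (auto split: option.splits prod.splits)

lemma lift_endo_in_E':
  assumes \<phi>: "\<phi> \<in> E" and \<Phi>: "lin_on (Nv i) \<Phi>" "\<Phi> ` Nv i \<subseteq> Nv i"
    and comm: "\<And>\<alpha> x. \<alpha> \<in> incident \<Longrightarrow> x \<in> Nv (rev_s i s t \<alpha>) \<Longrightarrow>
       lift_endo \<phi> \<Phi> (rev_t i s t \<alpha>) (Na \<alpha> x) = Na \<alpha> (lift_endo \<phi> \<Phi> (rev_s i s t \<alpha>) x)"
  shows "lift_endo \<phi> \<Phi> \<in> E'"
  unfolding endos_def
proof (intro CollectI conjI ballI)
  fix j assume j: "j \<in> V"
  show "lin_on (Nv j) (lift_endo \<phi> \<Phi> j)"
    using \<Phi>(1) lin_conj_emb[OF endo_lin[OF \<phi> j]] Nv_off unfolding lift_endo_def by auto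
  show "lift_endo \<phi> \<Phi> j ` Nv j \<subseteq> Nv j"
    using \<Phi>(2) endo_into[OF \<phi> j] Nv_off unfolding lift_endo_def by auto
next
  fix \<alpha> x assume \<alpha>: "\<alpha> \<in> A" and x: "x \<in> Nv (rev_s i s t \<alpha>)"
  show "lift_endo \<phi> \<Phi> (rev_t i s t \<alpha>) (Na \<alpha> x) = Na \<alpha> (lift_endo \<phi> \<Phi> (rev_s i s t \<alpha>) x)"
  proof (cases "\<alpha> \<in> incident")
    case False
    then have off: "s \<alpha> \<noteq> i" "t \<alpha> \<noteq> i" using \<alpha> unfolding incident_def by auto
    obtain m where m: "m \<in> Mv (s \<alpha>)" "x = emb m" using x rev_off[OF off] Nv_off[OF off(1)] by auto
    show ?thesis
      using rev_off[OF off] Na_off[OF off] endo_comm[OF \<phi> \<alpha> m(1)] off m unfolding lift_endo_def by simp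
  qed (rule comm[OF _ x])
qed

lemma lower_endo_at_in_E:
  assumes \<psi>: "\<psi> \<in> E'" and \<Psi>: "lin_on (Mv i) \<Psi>" "\<Psi> ` Mv i \<subseteq> Mv i"
    and comm: "\<And>\<alpha> x. \<alpha> \<in> incident \<Longrightarrow> x \<in> Mv (s \<alpha>) \<Longrightarrow>
       lower_endo_at \<psi> \<Psi> (t \<alpha>) (Ma \<alpha> x) = Ma \<alpha> (lower_endo_at \<psi> \<Psi> (s \<alpha>) x)"
  shows "lower_endo_at \<psi> \<Psi> \<in> E"
  unfolding endos_def
proof (intro CollectI conjI ballI)
  fix j assume j: "j \<in> V"
  show "lin_on (Mv j) (lower_endo_at \<psi> \<Psi> j)" "lower_endo_at \<psi> \<Psi> j ` Mv j \<subseteq> Mv j"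
    using \<Psi> off_i_endo_lower_endo[OF \<psi>] j unfolding lower_endo_at_def off_i_endo_def by auto
next
  fix \<alpha> x assume \<alpha>: "\<alpha> \<in> A" and x: "x \<in> Mv (s \<alpha>)"
  show "lower_endo_at \<psi> \<Psi> (t \<alpha>) (Ma \<alpha> x) = Ma \<alpha> (lower_endo_at \<psi> \<Psi> (s \<alpha>) x)"
  proof (cases "\<alpha> \<in> incident")
    case False
    then have off: "s \<alpha> \<noteq> i" "t \<alpha> \<noteq> i" using \<alpha> unfolding incident_def by auto
    have "emb x \<in> Nv (rev_s i s t \<alpha>)" using rev_off[OF off] Nv_off[OF off(1)] x by simp
    from E'_D(3)[OF \<psi> \<alpha> this]
    have "\<psi> (t \<alpha>) (emb (Ma \<alpha> x)) = emb (Ma \<alpha> (lower_endo \<psi> (s \<alpha>) x))"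
      using rev_off[OF off] Na_off[OF off] lower_endo_emb[OF \<psi> st_V(1)[OF \<alpha>] off(1) x] by simp
    then show ?thesis using off unfolding lower_endo_at_def lower_endo_def by simp
  qed (rule comm[OF _ x])
qed

lemma length_off_i:
  assumes j: "j \<in> V" "j \<noteq> i"
    and lift: "\<And>\<phi>. \<phi> \<in> E \<Longrightarrow> \<exists>\<Phi>. lift_endo \<phi> \<Phi> \<in> E'"
    and lower: "\<And>\<psi>. \<psi> \<in> E' \<Longrightarrow> \<exists>\<Psi>. lower_endo_at \<psi> \<Psi> \<in> E"
  shows "mod_length (esub V A (rev_s i s t) (rev_t i s t) Nv Na j) = mod_length (esub V A s t Mv Ma j)"
proof -
  have "has_chain (inv_subspace (Mv j) E (\<lambda>\<phi>. \<phi> j)) n = has_chain (inv_subspace (emb ` Mv j) E' (\<lambda>\<psi>. \<psi> j)) n" for n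
  proof (rule inv_subspace_chain_iso[OF Mv_sub[OF j(1)] _ lin_emb _ refl])
    show "inj_on emb (Mv j)" by (rule inj_onI) (rule emb_inj)
    show "\<forall>e\<in>E. e j ` Mv j \<subseteq> Mv j" using endo_into j(1) by blast
    show "\<forall>\<phi>\<in>E. \<exists>\<psi>\<in>E'. \<forall>x\<in>Mv j. emb (\<phi> j x) = \<psi> j (emb x)"
    proof
      fix \<phi> assume "\<phi> \<in> E"
      then obtain \<Phi> where "lift_endo \<phi> \<Phi> \<in> E'" using lift by blast
      then show "\<exists>\<psi>\<in>E'. \<forall>x\<in>Mv j. emb (\<phi> j x) = \<psi> j (emb x)"
        using j(2) by (intro bexI[of _ "lift_endo \<phi> \<Phi>"]) (simp_all add: lift_endo_def)
    qed
    show "\<forall>\<psi>\<in>E'. \<exists>\<phi>\<in>E. \<forall>x\<in>Mv j. \<psi> j (emb x) = emb (\<phi> j x)"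
    proof
      fix \<psi> assume \<psi>: "\<psi> \<in> E'"
      then obtain \<Psi> where "lower_endo_at \<psi> \<Psi> \<in> E" using lower by blast
      then show "\<exists>\<phi>\<in>E. \<forall>x\<in>Mv j. \<psi> j (emb x) = emb (\<phi> j x)"
        using lower_endo_emb(1)[OF \<psi> j] j(2)
        by (intro bexI[of _ "lower_endo_at \<psi> \<Psi>"]) (simp_all add: lower_endo_at_def)
    qed
  qed
  then show ?thesis unfolding esub_eq_inv_subspace Nv_off[OF j(2)] by (intro mod_length_cong) simp
qed

lemma Dim_reflection:
  assumes lift: "\<And>\<phi>. \<phi> \<in> E \<Longrightarrow> \<exists>\<Phi>. lift_endo \<phi> \<Phi> \<in> E'"
    and lower: "\<And>\<psi>. \<psi> \<in> E' \<Longrightarrow> \<exists>\<Psi>. lower_endo_at \<psi> \<Psi> \<in> E"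
    and at_i: "int (mod_length (esub V A (rev_s i s t) (rev_t i s t) Nv Na i)) =
      (\<Sum>\<alpha>\<in>incident. int (mod_length (esub V A s t Mv Ma (other \<alpha>)))) - int (mod_length (esub V A s t Mv Ma i))"
  shows "Dim V A (rev_s i s t) (rev_t i s t) Nv Na = refl_vec V A s t i (Dim V A s t Mv Ma)"
proof
  fix j
  have "(\<Sum>\<alpha>\<in>{\<alpha>\<in>A. s \<alpha> = i \<or> t \<alpha> = i}. Dim V A s t Mv Ma (if s \<alpha> = i then t \<alpha> else s \<alpha>))
      = (\<Sum>\<alpha>\<in>incident. int (mod_length (esub V A s t Mv Ma (other \<alpha>))))"
    using other_V unfolding incident_def other_def Dim_def by (intro sum.cong) auto
  then show "Dim V A (rev_s i s t) (rev_t i s t) Nv Na j = refl_vec V A s t i (Dim V A s t Mv Ma) j"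
    using at_i length_off_i[OF _ _ lift lower] i_V unfolding refl_vec_def Dim_def by auto
qed

end


section \<open>Reflection at a sink\<close>

locale sink_reflection = generic_rep V A s t Mv Ma
  for V :: "'v set" and A :: "'a set" and s t :: "'a \<Rightarrow> 'v"
    and Mv :: "'v \<Rightarrow> ('w \<Rightarrow> 'k::field) set" and Ma :: "'a \<Rightarrow> ('w \<Rightarrow> 'k) \<Rightarrow> ('w \<Rightarrow> 'k)" +
  fixes i :: 'v
  assumes sink: "is_sink V A s t i"

sublocale sink_reflection \<subseteq> vertex_reflection V A s t Mv Ma i
  "sink_space V A s t Mv Ma i" "sink_map V A s t Mv Ma i"
  by unfold_locales (use sink in \<open>auto simp: is_sink_def sink_space_def sink_map_def\<close>)

context sink_reflection
begin

abbreviation "K \<equiv> sink_space V A s t Mv Ma i i"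

definition "pi f = (\<Sum>\<alpha>\<in>incident. Ma \<alpha> (comp \<alpha> f))"

lemma incident_sink: "incident = {\<alpha>\<in>A. t \<alpha> = i}"
  using sink unfolding incident_def is_sink_def by auto

lemma incident_sink_D: "\<alpha> \<in> incident \<Longrightarrow> \<alpha> \<in> A \<and> t \<alpha> = i \<and> other \<alpha> = s \<alpha>"
  using sink unfolding incident_def other_def is_sink_def by auto

lemma other_sink: "\<alpha> \<in> incident \<Longrightarrow> other \<alpha> = s \<alpha>"
  using incident_sink_D by blast

lemma X_comp_sink: "f \<in> X \<Longrightarrow> \<alpha> \<in> incident \<Longrightarrow> comp \<alpha> f \<in> Mv (s \<alpha>)"
  using X_comp other_sink by metis

lemma K_eq: "K = {f\<in>X. pi f = 0}"
proof -
  have inc: "(\<alpha> \<notin> A \<or> t \<alpha> \<noteq> i) \<longleftrightarrow> \<alpha> \<notin> incident" for \<alpha> unfolding incident_sink by auto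
  have "K = {f. (\<forall>u. f (None, u) = 0) \<and> (\<forall>\<alpha>. \<alpha> \<notin> incident \<longrightarrow> comp \<alpha> f = 0) \<and>
      (\<forall>\<alpha>\<in>incident. comp \<alpha> f \<in> Mv (s \<alpha>)) \<and> pi f = 0}"
    unfolding sink_space_def pi_def lam_sum by (simp add: inc incident_sink Ball_def imp_conjL)
  also have "\<dots> = {f\<in>X. pi f = 0}"
    unfolding X_def arrow_sum_def using other_sink by auto
  finally show ?thesis .
qed

lemma lin_pi: "lin_on X pi"
proof (rule linI)
  fix x y assume x: "x \<in> X" and y: "y \<in> X"
  show "pi (x + y) = pi x + pi y"
    unfolding pi_def comp_add sum.distrib[symmetric]
    using lin_add[OF Ma_lin X_comp_sink[OF x] X_comp_sink[OF y]] incident_A by (intro sum.cong) auto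
next
  fix c x assume x: "x \<in> X"
  have "pi (\<lambda>u. c * x u) = (\<Sum>\<alpha>\<in>incident. (\<lambda>u. c * Ma \<alpha> (comp \<alpha> x) u))"
    unfolding pi_def comp_scale using lin_scale[OF Ma_lin X_comp_sink[OF x]] incident_A by (intro sum.cong) auto
  also have "\<dots> = (\<lambda>u. c * pi x u)" unfolding pi_def by (rule ext) (simp add: sum_fun_apply sum_distrib_left)
  finally show "pi (\<lambda>u. c * x u) = (\<lambda>u. c * pi x u)" .
qed

lemma pi_into: "f \<in> X \<Longrightarrow> pi f \<in> Mv i"
  unfolding pi_def using Ma_into[OF incident_A X_comp_sink] incident_sink_D
  by (intro subspace_sum[OF Mv_sub[OF i_V]]) force

lemma pi_inj_comp: "\<alpha> \<in> incident \<Longrightarrow> m \<in> Mv (s \<alpha>) \<Longrightarrow> pi (inj_comp \<alpha> m) = Ma \<alpha> m"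
proof -
  assume \<alpha>: "\<alpha> \<in> incident" "m \<in> Mv (s \<alpha>)"
  have "pi (inj_comp \<alpha> m) = (\<Sum>\<beta>\<in>incident. if \<beta> = \<alpha> then Ma \<alpha> m else 0)"
    unfolding pi_def by (rule sum.cong) (auto simp: Ma_0 incident_A)
  then show ?thesis using \<alpha> finite_incident by (simp add: sum.delta')
qed

lemma pi_D: "\<phi> \<in> E \<Longrightarrow> f \<in> X \<Longrightarrow> pi (D \<phi> f) = \<phi> i (pi f)"
proof -
  assume \<phi>: "\<phi> \<in> E" and f: "f \<in> X"
  have "pi (D \<phi> f) = (\<Sum>\<alpha>\<in>incident. \<phi> i (Ma \<alpha> (comp \<alpha> f)))"
    unfolding pi_def D_def using endo_comm[OF \<phi> incident_A X_comp_sink[OF f]] incident_sink_D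
    by (intro sum.cong) auto
  also have "\<dots> = \<phi> i (pi f)"
    unfolding pi_def using Ma_into[OF incident_A X_comp_sink[OF f]] incident_sink_D
    by (intro lin_sum[OF Mv_sub[OF i_V] endo_lin[OF \<phi> i_V], symmetric]) force
  finally show ?thesis .
qed

text \<open>Surjectivity of the sum map: otherwise a complement of its image at the sink
  would split off as a direct summand.\<close>
lemma pi_onto: "pi ` X = Mv i"
proof -
  let ?I = "pi ` X"
  have I: "is_subspace ?I" "?I \<subseteq> Mv i" using subspace_image[OF X_sub lin_pi] pi_into by auto
  obtain C where C: "is_subspace C" "C \<subseteq> Mv i" "C \<inter> ?I = {0}" "\<And>w. w \<in> Mv i \<Longrightarrow> \<exists>c\<in>C. \<exists>l\<in>?I. w = c + l"
    by (rule subspace_complementE[OF Mv_sub[OF i_V] I]) (rule that)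
  have "C = {0} \<or> (?I = {0} \<and> (\<forall>j\<in>V. j \<noteq> i \<longrightarrow> Mv j = {0}))"
  proof (rule splitting_at_vertex[OF i_V I C(1,2)])
    show "?I \<inter> C = {0}" using C(3) by blast
    show "\<exists>l\<in>?I. \<exists>c\<in>C. m = l + c" if "m \<in> Mv i" for m using C(4)[OF that] by (metis add.commute)
    show "Ma \<alpha> x \<in> (if t \<alpha> = i then ?I else Mv (t \<alpha>))"
      if \<alpha>: "\<alpha> \<in> A" and x: "x \<in> (if s \<alpha> = i then ?I else Mv (s \<alpha>))" for \<alpha> x
    proof -
      have "s \<alpha> \<noteq> i" using sink \<alpha> unfolding is_sink_def by auto
      then have x': "x \<in> Mv (s \<alpha>)" using x by simp
      show ?thesis
      proof (cases "t \<alpha> = i")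
        case True
        then have "\<alpha> \<in> incident" using \<alpha> unfolding incident_sink by auto
        then have "Ma \<alpha> x = pi (inj_comp \<alpha> x)" "inj_comp \<alpha> x \<in> X"
          using pi_inj_comp inj_comp_X other_sink x' by auto
        then show ?thesis using True by auto
      qed (use Ma_into[OF \<alpha> x'] in auto)
    qed
    show "Ma \<alpha> x = 0" if "\<alpha> \<in> A" "s \<alpha> = i" "x \<in> C" for \<alpha> x
      using sink that unfolding is_sink_def by auto
  qed
  then have "C = {0}" using not_concentrated[OF i_V] by blast
  then show ?thesis using C(4) I(2) by fastforce
qed

sublocale sink_exact: short_exact X "Mv i" pi E D "\<lambda>\<phi>. \<phi> i"
proof
  show "\<forall>\<phi>\<in>E. D \<phi> ` X \<subseteq> X" using D_X E_off_i_endo by blast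
  show "\<forall>\<phi>\<in>E. lin_on (Mv i) (\<phi> i)" using endo_lin i_V by blast
  show "\<forall>\<phi>\<in>E. \<forall>x\<in>X. pi (D \<phi> x) = \<phi> i (pi x)" using pi_D by blast
qed (use X_sub Mv_sub[OF i_V] lin_pi pi_onto in auto)

lemma sink_exact_K: "sink_exact.K = K"
  unfolding sink_exact.K_def K_eq ..

lemma lower_endo_K:
  assumes \<psi>: "\<psi> \<in> E'" and f: "f \<in> K"
  shows "\<psi> i f = D (lower_endo \<psi>) f"
proof -
  have "\<psi> i f \<in> X" "D (lower_endo \<psi>) f \<in> X"
    using E'_D(2)[OF \<psi> i_V] f K_eq D_X[OF off_i_endo_lower_endo[OF \<psi>]] by auto
  then show ?thesis unfolding X_def
  proof (rule arrow_sum_eqI)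
    fix \<alpha> assume \<alpha>: "\<alpha> \<in> incident"
    note a = incident_sink_D[OF \<alpha>] and r = rev_incident[OF \<alpha>]
    have "f \<in> sink_space V A s t Mv Ma i (rev_s i s t \<alpha>)" using r a f by simp
    from E'_D(3)[OF \<psi> conjunct1[OF a] this]
    have "\<psi> (s \<alpha>) (emb (comp \<alpha> f)) = emb (comp \<alpha> (\<psi> i f))" using r a by (simp add: sink_map_def)
    then have "comp \<alpha> (\<psi> i f) = lower_endo \<psi> (s \<alpha>) (comp \<alpha> f)" unfolding lower_endo_def by simp
    then show "comp \<alpha> (\<psi> i f) = comp \<alpha> (D (lower_endo \<psi>) f)" using \<alpha> a by (simp add: D_def)
  qed
qed

lemma lift_endo_sink: "\<phi> \<in> E \<Longrightarrow> lift_endo \<phi> (D \<phi>) \<in> E'"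
proof (rule lift_endo_in_E')
  assume \<phi>: "\<phi> \<in> E"
  show "lin_on K (D \<phi>)" using lin_on_subset[OF lin_D[OF E_off_i_endo[OF \<phi>]]] K_eq by auto
  show "D \<phi> ` K \<subseteq> K" using sink_exact.inv_subspace_K \<phi> unfolding sink_exact_K inv_subspace_def by blast
  fix \<alpha> x assume \<alpha>: "\<alpha> \<in> incident" and "x \<in> sink_space V A s t Mv Ma i (rev_s i s t \<alpha>)"
  then show "lift_endo \<phi> (D \<phi>) (rev_t i s t \<alpha>) (sink_map V A s t Mv Ma i \<alpha> x)
      = sink_map V A s t Mv Ma i \<alpha> (lift_endo \<phi> (D \<phi>) (rev_s i s t \<alpha>) x)"
    using rev_incident[OF \<alpha>] incident_sink_D[OF \<alpha>] other_ne[OF \<alpha>] \<alpha>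
    by (simp add: lift_endo_def sink_map_def D_def)
qed (simp add: lift_endo_def)

lemma lower_endo_sink:
  assumes \<psi>: "\<psi> \<in> E'"
  shows "lower_endo_at \<psi> (quotient_map X pi (D (lower_endo \<psi>))) \<in> E"
proof -
  let ?T = "D (lower_endo \<psi>)" and ?\<Psi> = "quotient_map X pi (D (lower_endo \<psi>))"
  have T: "lin_on X ?T" "?T ` X \<subseteq> X"
    using lin_D[OF off_i_endo_lower_endo[OF \<psi>]] D_X[OF off_i_endo_lower_endo[OF \<psi>]] by blast+
  have ker: "\<forall>x\<in>X. pi x = 0 \<longrightarrow> pi (?T x) = 0"
  proof (intro ballI impI)
    fix x assume "x \<in> X" "pi x = 0"
    then have "x \<in> K" using K_eq by blast
    then have "\<psi> i x \<in> K" "\<psi> i x = ?T x" using E'_D(2)[OF \<psi> i_V] lower_endo_K[OF \<psi>] by auto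
    then show "pi (?T x) = 0" using K_eq by auto
  qed
  note q = quotient_map_eq[where T="?T", OF X_sub lin_pi T ker]
    lin_quotient_map[where T="?T", OF X_sub lin_pi T ker] quotient_map_into[where T="?T", OF X_sub lin_pi T ker]
  show ?thesis
  proof (rule lower_endo_at_in_E[OF \<psi>])
    show "lin_on (Mv i) ?\<Psi>" by (rule q(2)[unfolded pi_onto])
    show "?\<Psi> ` Mv i \<subseteq> Mv i" by (rule q(3)[unfolded pi_onto])
    fix \<alpha> x assume \<alpha>: "\<alpha> \<in> incident" and x: "x \<in> Mv (s \<alpha>)"
    note a = incident_sink_D[OF \<alpha>]
    have sa: "s \<alpha> \<in> V" "s \<alpha> \<noteq> i" using other_V[OF \<alpha>] other_ne[OF \<alpha>] a by auto
    have "?\<Psi> (Ma \<alpha> x) = ?\<Psi> (pi (inj_comp \<alpha> x))" using pi_inj_comp[OF \<alpha> x] by simp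
    also have "\<dots> = pi (?T (inj_comp \<alpha> x))" using q(1) inj_comp_X[OF \<alpha>] a x by simp
    also have "\<dots> = pi (inj_comp \<alpha> (lower_endo \<psi> (s \<alpha>) x))"
      using D_inj_comp[OF off_i_endo_lower_endo[OF \<psi>] \<alpha>] x a by simp
    also have "\<dots> = Ma \<alpha> (lower_endo \<psi> (s \<alpha>) x)"
      by (rule pi_inj_comp[OF \<alpha> lower_endo_emb(2)[OF \<psi> sa x]])
    finally show "lower_endo_at \<psi> ?\<Psi> (t \<alpha>) (Ma \<alpha> x) = Ma \<alpha> (lower_endo_at \<psi> ?\<Psi> (s \<alpha>) x)"
      using a sa unfolding lower_endo_at_def by simp
  qed
qed

lemma length_at_sink:
  "int (mod_length (esub V A (rev_s i s t) (rev_t i s t) (sink_space V A s t Mv Ma i) (sink_map V A s t Mv Ma i) i)) =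
     (\<Sum>\<alpha>\<in>incident. int (mod_length (esub V A s t Mv Ma (other \<alpha>)))) - int (mod_length (esub V A s t Mv Ma i))"
proof -
  have "inv_subspace K E' (\<lambda>\<psi>. \<psi> i) = inv_subspace K E D"
  proof (rule inv_subspace_cong)
    show "\<forall>\<psi>\<in>E'. \<exists>\<phi>\<in>E. \<forall>x\<in>K. \<psi> i x = D \<phi> x"
      using lower_endo_sink lower_endo_K D_lower_endo_at by metis
    show "\<forall>\<phi>\<in>E. \<exists>\<psi>\<in>E'. \<forall>x\<in>K. D \<phi> x = \<psi> i x"
    proof
      fix \<phi> assume "\<phi> \<in> E"
      then show "\<exists>\<psi>\<in>E'. \<forall>x\<in>K. D \<phi> x = \<psi> i x"
        using lift_endo_sink by (intro bexI[of _ "lift_endo \<phi> (D \<phi>)"]) (simp_all add: lift_endo_def)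
    qed
  qed
  moreover have "finite_length (inv_subspace K E D)"
    using finite_length_inv_subspace_subset[of K X] length_X K_eq by blast
  ultimately show ?thesis
    using sink_exact.length_additive(2)[unfolded sink_exact_K] length_X finite_length_vertex[OF i_V]
    unfolding esub_eq_inv_subspace by (simp add: of_nat_sum[symmetric])
qed

theorem Dim_sink_reflection:
  "Dim V A (rev_s i s t) (rev_t i s t) (sink_space V A s t Mv Ma i) (sink_map V A s t Mv Ma i)
     = refl_vec V A s t i (Dim V A s t Mv Ma)"
  using lift_endo_sink lower_endo_sink length_at_sink by (intro Dim_reflection) blast+

end


section \<open>Reflection at a source\<close>

locale source_reflection = generic_rep V A s t Mv Ma
  for V :: "'v set" and A :: "'a set" and s t :: "'a \<Rightarrow> 'v"
    and Mv :: "'v \<Rightarrow> ('w \<Rightarrow> 'k::field) set" and Ma :: "'a \<Rightarrow> ('w \<Rightarrow> 'k) \<Rightarrow> ('w \<Rightarrow> 'k)" +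
  fixes i :: 'v
  assumes source: "is_source V A s t i"

sublocale source_reflection \<subseteq> vertex_reflection V A s t Mv Ma i
  "source_space V A s t Mv Ma i" "source_map V A s t Mv Ma i"
  by unfold_locales (use source in \<open>auto simp: is_source_def source_space_def source_map_def\<close>)

context source_reflection
begin

definition "iota m = (\<lambda>(ob, u). case ob of None \<Rightarrow> 0
    | Some \<alpha> \<Rightarrow> if \<alpha> \<in> A \<and> s \<alpha> = i then Ma \<alpha> m u else 0)"

abbreviation "I \<equiv> iota ` Mv i"
abbreviation "C \<equiv> src_compl V A s t Mv Ma i"
abbreviation "proj \<equiv> src_proj V A s t Mv Ma i"

lemma incident_source: "incident = {\<alpha>\<in>A. s \<alpha> = i}"
  using source unfolding incident_def is_source_def by auto

lemma incident_source_D: "\<alpha> \<in> incident \<Longrightarrow> \<alpha> \<in> A \<and> s \<alpha> = i \<and> other \<alpha> = t \<alpha>"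
  using source unfolding incident_def other_def is_source_def by auto

lemma other_source: "\<alpha> \<in> incident \<Longrightarrow> other \<alpha> = t \<alpha>"
  using incident_source_D by blast

lemma src_sum_eq: "src_sum V A s t Mv i = X"
proof -
  have inc: "(\<alpha> \<notin> A \<or> s \<alpha> \<noteq> i) \<longleftrightarrow> \<alpha> \<notin> incident" for \<alpha> unfolding incident_source by auto
  have "src_sum V A s t Mv i = {f. (\<forall>u. f (None, u) = 0) \<and> (\<forall>\<alpha>. \<alpha> \<notin> incident \<longrightarrow> comp \<alpha> f = 0) \<and>
      (\<forall>\<alpha>\<in>incident. comp \<alpha> f \<in> Mv (t \<alpha>))}"
    unfolding src_sum_def by (simp add: inc incident_source Ball_def imp_conjL)
  also have "\<dots> = X" unfolding X_def arrow_sum_def using other_source by auto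
  finally show ?thesis .
qed

lemma src_image_eq: "src_image V A s t Mv Ma i = I"
  unfolding src_image_def iota_def by simp

lemma comp_iota [simp]: "comp \<alpha> (iota m) = (if \<alpha> \<in> incident then Ma \<alpha> m else 0)"
  unfolding iota_def comp_def incident_source by (auto simp: fun_eq_iff)
lemma unemb_iota [simp]: "unemb (iota m) = 0"
  unfolding iota_def unemb_def by (auto simp: fun_eq_iff)

lemma iota_X: "m \<in> Mv i \<Longrightarrow> iota m \<in> X"
  unfolding X_def arrow_sum_iff using Ma_into incident_source_D by auto

lemma lin_iota: "lin_on (Mv i) iota"
proof (rule linI)
  fix x y assume xy: "x \<in> Mv i" "y \<in> Mv i"
  show "iota (x + y) = iota x + iota y"
  proof (rule option_fun_eqI)
    fix \<alpha> show "comp \<alpha> (iota (x + y)) = comp \<alpha> (iota x + iota y)"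
      using lin_add[OF Ma_lin, of \<alpha> x y] xy incident_source_D by auto
  qed (simp add: iota_def)
next
  fix c x assume x: "x \<in> Mv i"
  show "iota (\<lambda>u. c * x u) = (\<lambda>u. c * iota x u)"
  proof (rule option_fun_eqI)
    fix \<alpha> show "comp \<alpha> (iota (\<lambda>u. c * x u)) = comp \<alpha> (\<lambda>u. c * iota x u)"
      using lin_scale[OF Ma_lin, of \<alpha> x c] x incident_source_D by auto
  qed (simp add: iota_def)
qed

lemma I_sub: "is_subspace I" by (rule subspace_image[OF Mv_sub[OF i_V] lin_iota])
lemma I_X: "I \<subseteq> X" using iota_X by blast

text \<open>Injectivity of the map into the sum: otherwise its kernel at the source would split
  off as a direct summand.\<close>
lemma inj_iota: "inj_on iota (Mv i)"
proof -
  let ?N = "{m\<in>Mv i. iota m = 0}"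
  have N: "is_subspace ?N" "?N \<subseteq> Mv i"
    using subspace_preimage[OF Mv_sub[OF i_V] lin_iota subspace_zero] by auto
  obtain C' where C': "is_subspace C'" "C' \<subseteq> Mv i" "C' \<inter> ?N = {0}" "\<And>w. w \<in> Mv i \<Longrightarrow> \<exists>c\<in>C'. \<exists>l\<in>?N. w = c + l"
    by (rule subspace_complementE[OF Mv_sub[OF i_V] N]) (rule that)
  have "?N = {0} \<or> (C' = {0} \<and> (\<forall>j\<in>V. j \<noteq> i \<longrightarrow> Mv j = {0}))"
  proof (rule splitting_at_vertex[OF i_V C'(1,2) N(1,2) C'(3) C'(4)])
    show "Ma \<alpha> x \<in> (if t \<alpha> = i then C' else Mv (t \<alpha>))"
      if \<alpha>: "\<alpha> \<in> A" and x: "x \<in> (if s \<alpha> = i then C' else Mv (s \<alpha>))" for \<alpha> x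
    proof -
      have "x \<in> Mv (s \<alpha>)" using x C'(2) by (cases "s \<alpha> = i") auto
      moreover have "t \<alpha> \<noteq> i" using source \<alpha> unfolding is_source_def by auto
      ultimately show ?thesis using Ma_into[OF \<alpha>] by simp
    qed
    show "Ma \<alpha> x = 0" if \<alpha>: "\<alpha> \<in> A" and "s \<alpha> = i" "x \<in> ?N" for \<alpha> x
    proof -
      have "\<alpha> \<in> incident" using \<alpha> \<open>s \<alpha> = i\<close> unfolding incident_source by auto
      moreover have "iota x = 0" using \<open>x \<in> ?N\<close> by simp
      ultimately show ?thesis using comp_iota[of \<alpha> x] by simp
    qed
  qed
  then have "?N = {0}" using not_concentrated[OF i_V] by blast
  then show ?thesis using lin_inj_onI[OF Mv_sub[OF i_V] lin_iota] by blast
qed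

lemma plus_fun_lambda: "(\<lambda>x. c x + g x) = c + (g :: 'a option \<times> 'w \<Rightarrow> 'k)"
  by (simp add: plus_fun_def)

lemma C_props: "is_subspace C" "C \<subseteq> X" "C \<inter> I = {0}" "\<And>p. p \<in> X \<Longrightarrow> \<exists>c\<in>C. \<exists>g\<in>I. p = c + g"
proof -
  obtain C' where C': "is_subspace C' \<and> C' \<subseteq> X \<and> C' \<inter> I = {0} \<and> (\<forall>w\<in>X. \<exists>c\<in>C'. \<exists>l\<in>I. w = c + l)"
    using subspace_complement_exists[OF X_sub I_sub I_X] by (elim exE)
  have "is_subspace C \<and> C \<subseteq> src_sum V A s t Mv i \<and> C \<inter> src_image V A s t Mv Ma i = {\<lambda>_. 0} \<and>
      (\<forall>p\<in>src_sum V A s t Mv i. \<exists>c\<in>C. \<exists>g\<in>src_image V A s t Mv Ma i. p = (\<lambda>x. c x + g x))"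
    unfolding src_compl_def
    by (rule someI[of _ C']) (simp only: src_sum_eq src_image_eq plus_fun_lambda zero_fun_lambda, use C' in blast)
  then show "is_subspace C" "C \<subseteq> X" "C \<inter> I = {0}" "\<And>p. p \<in> X \<Longrightarrow> \<exists>c\<in>C. \<exists>g\<in>I. p = c + g"
    unfolding src_sum_eq src_image_eq plus_fun_lambda zero_fun_lambda by auto
qed

lemma proj_unique:
  assumes "c \<in> C" "g \<in> I" "p = c + g"
  shows "proj p = c"
  unfolding src_proj_def src_image_eq plus_fun_lambda
proof (rule the_equality)
  fix c' assume "c' \<in> C \<and> (\<exists>g\<in>I. p = c' + g)"
  then obtain g' where c': "c' \<in> C" "g' \<in> I" "p = c' + g'" by blast
  have "c' - c = g - g'" using c'(3) assms(3) by (simp add: algebra_simps)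
  moreover have "c' - c \<in> C" "g - g' \<in> I"
    using subspace_diff[OF C_props(1) c'(1) assms(1)] subspace_diff[OF I_sub assms(2) c'(2)] by auto
  ultimately have "c' - c \<in> C \<inter> I" by simp
  then show "c' = c" using C_props(3) by simp
qed (use assms in blast)

lemma proj_spec: "p \<in> X \<Longrightarrow> proj p \<in> C \<and> p - proj p \<in> I"
  using C_props(4) proj_unique by fastforce

lemma proj_C: "c \<in> C \<Longrightarrow> proj c = c"
  using proj_unique[of c 0] subspace_0[OF I_sub] by simp
lemma proj_I: "g \<in> I \<Longrightarrow> proj g = 0"
  using proj_unique[of 0 g] subspace_0[OF C_props(1)] by simp

lemma lin_proj: "lin_on X proj"
proof (rule linI)
  fix x y assume "x \<in> X" "y \<in> X"
  then have "proj x + proj y \<in> C" "(x - proj x) + (y - proj y) \<in> I"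
    using proj_spec subspace_add[OF C_props(1)] subspace_add[OF I_sub] by auto
  then show "proj (x + y) = proj x + proj y" by (rule proj_unique) (simp add: algebra_simps)
next
  fix c x assume "x \<in> X"
  then have "(\<lambda>u. c * proj x u) \<in> C" "(\<lambda>u. c * (x - proj x) u) \<in> I"
    using proj_spec subspace_scale[OF C_props(1)] subspace_scale[OF I_sub] by blast+
  then show "proj (\<lambda>u. c * x u) = (\<lambda>u. c * proj x u)"
    by (rule proj_unique) (simp add: fun_eq_iff algebra_simps)
qed

lemma proj_onto: "proj ` X = C"
  using proj_spec proj_C C_props(2) by force

lemma proj_ker: "{p\<in>X. proj p = 0} = I"
  using proj_spec proj_I I_X by force

lemma D_iota:
  assumes \<phi>: "\<phi> \<in> E" and m: "m \<in> Mv i"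
  shows "D \<phi> (iota m) = iota (\<phi> i m)"
proof (rule option_fun_eqI)
  fix \<alpha> show "comp \<alpha> (D \<phi> (iota m)) = comp \<alpha> (iota (\<phi> i m))"
    using endo_comm[OF \<phi>, of \<alpha> m] m incident_source_D[of \<alpha>] by (auto simp: D_def)
qed (simp add: D_def arrow_sum_map_def iota_def)

definition "G \<phi> c = proj (D \<phi> c)"

lemma proj_D: "\<phi> \<in> E \<Longrightarrow> p \<in> X \<Longrightarrow> proj (D \<phi> p) = G \<phi> (proj p)"
proof -
  assume \<phi>: "\<phi> \<in> E" and p: "p \<in> X"
  have \<phi>': "off_i_endo \<phi>" by (rule E_off_i_endo[OF \<phi>])
  have pp: "proj p \<in> X" "p - proj p \<in> I" "p - proj p \<in> X" using proj_spec[OF p] C_props(2) I_X by auto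
  then obtain m where m: "m \<in> Mv i" "p - proj p = iota m" by blast
  have "D \<phi> p = D \<phi> (proj p) + D \<phi> (p - proj p)"
    using lin_add[OF lin_D[OF \<phi>'] pp(1,3)] by simp
  then have "proj (D \<phi> p) = G \<phi> (proj p) + proj (D \<phi> (p - proj p))"
    unfolding G_def using lin_add[OF lin_proj D_X[OF \<phi>' pp(1)] D_X[OF \<phi>' pp(3)]] by simp
  moreover have "proj (D \<phi> (p - proj p)) = 0"
    using m D_iota[OF \<phi>] endo_into[OF \<phi> i_V] proj_I by auto
  ultimately show ?thesis by simp
qed

sublocale source_exact: short_exact X C proj E D G
proof
  show "\<forall>\<phi>\<in>E. D \<phi> ` X \<subseteq> X" using D_X E_off_i_endo by blast
  show "\<forall>\<phi>\<in>E. lin_on C (G \<phi>)"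
  proof
    fix \<phi> assume "\<phi> \<in> E"
    then have \<phi>': "off_i_endo \<phi>" by (rule E_off_i_endo)
    show "lin_on C (G \<phi>)"
    proof (rule linI)
      fix x y assume "x \<in> C" "y \<in> C"
      then have xy: "x \<in> X" "y \<in> X" using C_props(2) by auto
      show "G \<phi> (x + y) = G \<phi> x + G \<phi> y" unfolding G_def
        using lin_add[OF lin_D[OF \<phi>'] xy] lin_add[OF lin_proj D_X[OF \<phi>' xy(1)] D_X[OF \<phi>' xy(2)]] by simp
    next
      fix c x assume "x \<in> C"
      then have x: "x \<in> X" using C_props(2) by auto
      show "G \<phi> (\<lambda>u. c * x u) = (\<lambda>u. c * G \<phi> x u)" unfolding G_def
        using lin_scale[OF lin_D[OF \<phi>'] x] lin_scale[OF lin_proj D_X[OF \<phi>' x]] by simp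
    qed
  qed
  show "\<forall>\<phi>\<in>E. \<forall>x\<in>X. proj (D \<phi> x) = G \<phi> (proj x)" using proj_D by blast
qed (use X_sub C_props(1) lin_proj proj_onto in auto)

lemma source_exact_K: "source_exact.K = I"
  unfolding source_exact.K_def proj_ker ..

lemma length_I: "has_chain (inv_subspace (Mv i) E (\<lambda>\<phi>. \<phi> i)) n = has_chain (inv_subspace I E D) n"
proof (rule inv_subspace_chain_iso[OF Mv_sub[OF i_V] _ lin_iota inj_iota refl])
  show "\<forall>\<phi>\<in>E. \<phi> i ` Mv i \<subseteq> Mv i" using endo_into i_V by blast
  show "\<forall>\<phi>\<in>E. \<exists>\<phi>'\<in>E. \<forall>x\<in>Mv i. iota (\<phi> i x) = D \<phi>' (iota x)" using D_iota by metis
  show "\<forall>\<phi>'\<in>E. \<exists>\<phi>\<in>E. \<forall>x\<in>Mv i. D \<phi>' (iota x) = iota (\<phi> i x)" using D_iota by metis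
qed

lemma lower_endo_proj_inj_comp:
  assumes \<psi>: "\<psi> \<in> E'" and \<alpha>: "\<alpha> \<in> incident" and m: "m \<in> Mv (t \<alpha>)"
  shows "\<psi> i (proj (inj_comp \<alpha> m)) = proj (inj_comp \<alpha> (lower_endo \<psi> (t \<alpha>) m))"
proof -
  note a = incident_source_D[OF \<alpha>] and r = rev_incident[OF \<alpha>]
  have ta: "t \<alpha> \<in> V" "t \<alpha> \<noteq> i" using other_V[OF \<alpha>] other_ne[OF \<alpha>] a by auto
  have "emb m \<in> source_space V A s t Mv Ma i (rev_s i s t \<alpha>)" using r ta m by (simp add: source_space_def)
  from E'_D(3)[OF \<psi> conjunct1[OF a] this]
  show ?thesis using r a lower_endo_emb(1)[OF \<psi> ta m] by (simp add: source_map_def)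
qed

lemma lower_endo_proj:
  assumes \<psi>: "\<psi> \<in> E'" and p: "p \<in> X"
  shows "\<psi> i (proj p) = proj (D (lower_endo \<psi>) p)"
proof -
  have \<psi>': "off_i_endo (lower_endo \<psi>)" by (rule off_i_endo_lower_endo[OF \<psi>])
  define q where "q \<alpha> = inj_comp \<alpha> (comp \<alpha> p)" for \<alpha>
  define q' where "q' \<alpha> = inj_comp \<alpha> (lower_endo \<psi> (t \<alpha>) (comp \<alpha> p))" for \<alpha>
  have comp_mem: "comp \<alpha> p \<in> Mv (t \<alpha>)" if "\<alpha> \<in> incident" for \<alpha>
    using X_comp[OF p that] other_source[OF that] by simp
  have qX: "q \<alpha> \<in> X" and q'X: "q' \<alpha> \<in> X" if "\<alpha> \<in> incident" for \<alpha>
    using inj_comp_X[OF that] comp_mem[OF that] off_i_endo_other[OF \<psi>' that] other_source[OF that]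
    unfolding q_def q'_def by auto
  have "p = (\<Sum>\<alpha>\<in>incident. q \<alpha>)"
    unfolding q_def using arrow_sum_decomp[OF finite_incident] p unfolding X_def by blast
  then have "\<psi> i (proj p) = \<psi> i (\<Sum>\<alpha>\<in>incident. proj (q \<alpha>))"
    using lin_sum[OF X_sub lin_proj, of incident q] qX by simp
  also have "\<dots> = (\<Sum>\<alpha>\<in>incident. \<psi> i (proj (q \<alpha>)))"
    using E'_D(1)[OF \<psi> i_V] proj_spec[OF qX]
    by (intro lin_sum[OF C_props(1)]) (simp_all add: source_space_def)
  also have "\<dots> = (\<Sum>\<alpha>\<in>incident. proj (q' \<alpha>))"
    unfolding q_def q'_def using lower_endo_proj_inj_comp[OF \<psi> _ comp_mem] by simp
  also have "\<dots> = proj (\<Sum>\<alpha>\<in>incident. q' \<alpha>)"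
    using lin_sum[OF X_sub lin_proj, of incident q'] q'X by simp
  also have "(\<Sum>\<alpha>\<in>incident. q' \<alpha>) = (\<Sum>\<alpha>\<in>incident. inj_comp \<alpha> (comp \<alpha> (D (lower_endo \<psi>) p)))"
    unfolding q'_def D_def using other_source by (intro sum.cong) simp_all
  also have "\<dots> = D (lower_endo \<psi>) p"
    using arrow_sum_decomp[OF finite_incident] D_X[OF \<psi>' p] unfolding X_def by metis
  finally show ?thesis .
qed

lemma lift_endo_source: "\<phi> \<in> E \<Longrightarrow> lift_endo \<phi> (G \<phi>) \<in> E'"
proof (rule lift_endo_in_E')
  assume \<phi>: "\<phi> \<in> E"
  show "lin_on (source_space V A s t Mv Ma i i) (G \<phi>)"
    using source_exact.G \<phi> by (simp add: source_space_def)
  show "G \<phi> ` source_space V A s t Mv Ma i i \<subseteq> source_space V A s t Mv Ma i i"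
    using proj_spec D_X[OF E_off_i_endo[OF \<phi>]] C_props(2) unfolding G_def by (auto simp: source_space_def)
  fix \<alpha> x assume \<alpha>: "\<alpha> \<in> incident" and x: "x \<in> source_space V A s t Mv Ma i (rev_s i s t \<alpha>)"
  note a = incident_source_D[OF \<alpha>] and r = rev_incident[OF \<alpha>]
  obtain m where m: "m \<in> Mv (t \<alpha>)" "x = emb m"
    using x r other_ne[OF \<alpha>] a by (auto simp: source_space_def)
  have "G \<phi> (proj (inj_comp \<alpha> m)) = proj (inj_comp \<alpha> (\<phi> (t \<alpha>) m))"
    using proj_D[OF \<phi> inj_comp_X[OF \<alpha>]] D_inj_comp[OF E_off_i_endo[OF \<phi>] \<alpha>] m a by simp
  then show "lift_endo \<phi> (G \<phi>) (rev_t i s t \<alpha>) (source_map V A s t Mv Ma i \<alpha> x)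
      = source_map V A s t Mv Ma i \<alpha> (lift_endo \<phi> (G \<phi>) (rev_s i s t \<alpha>) x)"
    using r a m other_ne[OF \<alpha>] by (simp add: lift_endo_def source_map_def)
qed (simp add: lift_endo_def)

lemma lower_endo_source:
  assumes \<psi>: "\<psi> \<in> E'"
  shows "lower_endo_at \<psi> (restriction_map (Mv i) iota (D (lower_endo \<psi>))) \<in> E"
proof -
  let ?T = "D (lower_endo \<psi>)" and ?\<Psi> = "restriction_map (Mv i) iota (D (lower_endo \<psi>))"
  have \<psi>': "off_i_endo (lower_endo \<psi>)" by (rule off_i_endo_lower_endo[OF \<psi>])
  have img: "?T ` I \<subseteq> I"
  proof
    fix y assume "y \<in> ?T ` I"
    then obtain m where m: "m \<in> Mv i" "y = ?T (iota m)" by blast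
    have "proj y = \<psi> i (proj (iota m))" using lower_endo_proj[OF \<psi> iota_X[OF m(1)]] m(2) by simp
    also have "\<dots> = 0"
      using proj_I lin_0[OF C_props(1)] E'_D(1)[OF \<psi> i_V] m(1) by (simp add: source_space_def)
    finally show "y \<in> I" using proj_ker D_X[OF \<psi>' iota_X[OF m(1)]] m(2) by blast
  qed
  note rm = restriction_map[OF Mv_sub[OF i_V] lin_iota inj_iota I_X lin_D[OF \<psi>'] img]
    lin_restriction_map[OF Mv_sub[OF i_V] lin_iota inj_iota I_X lin_D[OF \<psi>'] img]
  show ?thesis
  proof (rule lower_endo_at_in_E[OF \<psi> rm(3)])
    show "?\<Psi> ` Mv i \<subseteq> Mv i" using rm(1) by blast
    fix \<alpha> x assume \<alpha>: "\<alpha> \<in> incident" and x: "x \<in> Mv (s \<alpha>)"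
    note a = incident_source_D[OF \<alpha>]
    have "Ma \<alpha> (?\<Psi> x) = comp \<alpha> (?T (iota x))" using rm(2) x a \<alpha> comp_iota by metis
    also have "\<dots> = lower_endo \<psi> (t \<alpha>) (Ma \<alpha> x)" using \<alpha> a by (simp add: D_def)
    finally show "lower_endo_at \<psi> ?\<Psi> (t \<alpha>) (Ma \<alpha> x) = Ma \<alpha> (lower_endo_at \<psi> ?\<Psi> (s \<alpha>) x)"
      using a other_ne[OF \<alpha>] unfolding lower_endo_at_def by simp
  qed
qed

lemma length_at_source:
  "int (mod_length (esub V A (rev_s i s t) (rev_t i s t) (source_space V A s t Mv Ma i) (source_map V A s t Mv Ma i) i)) =
     (\<Sum>\<alpha>\<in>incident. int (mod_length (esub V A s t Mv Ma (other \<alpha>)))) - int (mod_length (esub V A s t Mv Ma i))"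
proof -
  have "inv_subspace C E' (\<lambda>\<psi>. \<psi> i) = inv_subspace C E G"
  proof (rule inv_subspace_cong)
    show "\<forall>\<psi>\<in>E'. \<exists>\<phi>\<in>E. \<forall>x\<in>C. \<psi> i x = G \<phi> x"
    proof
      fix \<psi> assume \<psi>: "\<psi> \<in> E'"
      have "\<psi> i x = G (lower_endo_at \<psi> (restriction_map (Mv i) iota (D (lower_endo \<psi>)))) x" if "x \<in> C" for x
        using lower_endo_proj[OF \<psi>, of x] proj_C[OF that] C_props(2) that
        unfolding G_def D_lower_endo_at by auto
      then show "\<exists>\<phi>\<in>E. \<forall>x\<in>C. \<psi> i x = G \<phi> x" using lower_endo_source[OF \<psi>] by blast
    qed
    show "\<forall>\<phi>\<in>E. \<exists>\<psi>\<in>E'. \<forall>x\<in>C. G \<phi> x = \<psi> i x"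
    proof
      fix \<phi> assume "\<phi> \<in> E"
      then show "\<exists>\<psi>\<in>E'. \<forall>x\<in>C. G \<phi> x = \<psi> i x"
        using lift_endo_source by (intro bexI[of _ "lift_endo \<phi> (G \<phi>)"]) (simp_all add: lift_endo_def)
    qed
  qed
  moreover have "finite_length (inv_subspace I E D)"
    using finite_length_inv_subspace_subset[OF I_X] length_X by blast
  moreover have "finite_length (inv_subspace C E G)"
    using finite_length_inv_subspace_image[OF X_sub _ lin_proj proj_onto _ conjunct1[OF length_X]]
      source_exact.FX source_exact.eqv by blast
  ultimately show ?thesis
    using source_exact.length_additive(2)[unfolded source_exact_K] length_X mod_length_cong[OF length_I]
    unfolding esub_eq_inv_subspace by (simp add: source_space_def of_nat_sum[symmetric])
qed

theorem Dim_source_reflection: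
  "Dim V A (rev_s i s t) (rev_t i s t) (source_space V A s t Mv Ma i) (source_map V A s t Mv Ma i)
     = refl_vec V A s t i (Dim V A s t Mv Ma)"
  using lift_endo_source lower_endo_source length_at_source by (intro Dim_reflection) blast+

end

theorem lemma3:
  fixes V :: "'v set" and A :: "'a set" and s t :: "'a \<Rightarrow> 'v"
    and Mv :: "'v \<Rightarrow> ('w \<Rightarrow> 'k::field) set" and Ma :: "'a \<Rightarrow> ('w \<Rightarrow> 'k) \<Rightarrow> ('w \<Rightarrow> 'k)"
    and i :: 'v
  assumes "finite_quiver V A s t"
    and "connected_quiver V A s t"
    and "no_oriented_cycles V A s t"
    and "generic V A s t Mv Ma"
  shows "(is_sink V A s t i \<longrightarrow>
            Dim V A (rev_s i s t) (rev_t i s t)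
                (sink_space V A s t Mv Ma i) (sink_map V A s t Mv Ma i)
              = refl_vec V A s t i (Dim V A s t Mv Ma))
       \<and> (is_source V A s t i \<longrightarrow>
            Dim V A (rev_s i s t) (rev_t i s t)
                (source_space V A s t Mv Ma i) (source_map V A s t Mv Ma i)
              = refl_vec V A s t i (Dim V A s t Mv Ma))"
proof (intro conjI impI)
  assume "is_sink V A s t i"
  with assms interpret sink_reflection V A s t Mv Ma i by unfold_locales
  show "Dim V A (rev_s i s t) (rev_t i s t) (sink_space V A s t Mv Ma i) (sink_map V A s t Mv Ma i)
      = refl_vec V A s t i (Dim V A s t Mv Ma)"
    by (rule Dim_sink_reflection)
next
  assume "is_source V A s t i"
  with assms interpret source_reflection V A s t Mv Ma i by unfold_locales
  show "Dim V A (rev_s i s t) (rev_t i s t) (source_space V A s t Mv Ma i) (source_map V A s t Mv Ma i)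
      = refl_vec V A s t i (Dim V A s t Mv Ma)"
    by (rule Dim_source_reflection)
qed

end
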